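(* Let $\varepsilon$ be a splitting on a connected manifold $M$. Then $\mathcal R(\varepsilon)=0$ on $M\times M$ (i.e. $\varepsilon$ is flat) if and only if $\mathcal R_2(\varepsilon)=0$ on $M$.
   Context: A splitting $\varepsilon$ on a connected manifold $M$ ($\dim\ge2$) assigns smoothly to each $(p,q)$ a linear isomorphism $\varepsilon^{p,q}:T_pM\to T_qM$ with $\varepsilon^{q,r}\circ\varepsilon^{p,q}=\varepsilon^{p,r}$, $\varepsilon^{p,p}=\mathrm{id}$; in charts $(U,x^i)$, $(V,y^i)$ it has components $\varepsilon^i_j(x,y)$ with $\varepsilon^{p,q}(\partial/\partial x^j)=\varepsilon^i_j(x,y)\partial/\partial y^i$. $\mathcal R(\varepsilon)^i_{kj}(x,y)=A^i_{kj}-A^i_{jk}$ with $A^i_{kj}=\partial\varepsilon^i_j(x,y)/\partial x^k+(\partial\varepsilon^i_j(x,y)/\partial y^a)\varepsilon^a_k(x,y)$. $\Gamma^i_{jk}(x)=[\partial\varepsilon^i_k(x,y)/\partial y^j]_{y=x}$ and $\mathcal R_2(\varepsilon)^i_{rj,k}=B^i_{rj,k}-B^i_{jr,k}$ with $B^i_{rj,k}=\partial_r\Gamma^i_{kj}+\Gamma^a_{kr}\Gamma^i_{aj}$ (summation convention). *)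

theory Defs
  imports "HOL-Analysis.Analysis"
begin

fun Ck :: "nat \<Rightarrow> 'a::euclidean_space set \<Rightarrow> ('a \<Rightarrow> real) \<Rightarrow> bool" where
  "Ck 0 S f = continuous_on S f"
| "Ck (Suc k) S f = (f differentiable_on S \<and>
      (\<forall>b\<in>Basis. Ck k S (\<lambda>x. frechet_derivative f (at x) b)))"

definition smooth_fun :: "'a::euclidean_space set \<Rightarrow> ('a \<Rightarrow> real) \<Rightarrow> bool" where
  "smooth_fun S f \<longleftrightarrow> (\<forall>k. Ck k S f)"

type_synonym ('m, 'n) chart = "'m set \<times> ('m \<Rightarrow> real^'n)"

definition chart_img :: "('m, 'n) chart \<Rightarrow> (real^'n) set" where
  "chart_img c = snd c ` fst c"

definition chart_inv :: "('m, 'n) chart \<Rightarrow> real^'n \<Rightarrow> 'm" where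
  "chart_inv c = inv_into (fst c) (snd c)"

definition transition :: "('m, 'n) chart \<Rightarrow> ('m, 'n) chart \<Rightarrow> real^'n \<Rightarrow> real^'n" where
  "transition c c' z = snd c' (chart_inv c z)"

definition smooth_atlas :: "('m::topological_space, 'n::finite) chart set \<Rightarrow> bool" where
  "smooth_atlas A \<longleftrightarrow>
     (\<forall>c\<in>A. open (fst c) \<and> inj_on (snd c) (fst c) \<and> open (chart_img c) \<and>
            continuous_on (fst c) (snd c) \<and> continuous_on (chart_img c) (chart_inv c)) \<and>
     (\<Union>c\<in>A. fst c) = UNIV \<and>
     (\<forall>c\<in>A. \<forall>c'\<in>A. \<forall>i. smooth_fun (snd c ` (fst c \<inter> fst c')) (\<lambda>z. transition c c' z $ i))"

text \<open>Jacobian of the transition from chart c to chart c' at the point z (coordinates of c):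
  entry (i,a) is the partial derivative of the i-th coordinate of c' w.r.t. the a-th coordinate of c.\<close>

definition jac :: "('m, 'n::finite) chart \<Rightarrow> ('m, 'n) chart \<Rightarrow> real^'n \<Rightarrow> real^'n^'n" where
  "jac c c' z = (\<chi> i a. frechet_derivative (\<lambda>w. transition c c' w $ i) (at z) (axis a 1))"

text \<open>A splitting is given through its components in charts:
  eps c d p q $ i $ j = eps^i_j(x,y), i.e. eps^{p,q}(d/dx^j) = eps^i_j d/dy^i,
  where c = (U,x) contains p and d = (V,y) contains q.  The tangent-vector
  transformation law expresses that these are the components of one family
  of linear maps eps^{p,q} : T_pM -> T_qM.\<close>

definition eps_coord ::
  "(('m, 'n) chart \<Rightarrow> ('m, 'n) chart \<Rightarrow> 'm \<Rightarrow> 'm \<Rightarrow> real^'n^'n) \<Rightarrow>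
   ('m, 'n) chart \<Rightarrow> ('m, 'n) chart \<Rightarrow> 'n \<Rightarrow> 'n \<Rightarrow> ((real^'n) \<times> (real^'n)) \<Rightarrow> real" where
  "eps_coord eps c d i j = (\<lambda>(x, y). eps c d (chart_inv c x) (chart_inv d y) $ i $ j)"

definition is_splitting ::
  "('m::topological_space, 'n::finite) chart set \<Rightarrow>
   (('m, 'n) chart \<Rightarrow> ('m, 'n) chart \<Rightarrow> 'm \<Rightarrow> 'm \<Rightarrow> real^'n^'n) \<Rightarrow> bool" where
  "is_splitting A eps \<longleftrightarrow>
     (\<forall>c\<in>A. \<forall>d\<in>A. \<forall>p\<in>fst c. \<forall>q\<in>fst d. invertible (eps c d p q)) \<and>
     (\<forall>c\<in>A. \<forall>p\<in>fst c. eps c c p p = mat 1) \<and>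
     (\<forall>c\<in>A. \<forall>d\<in>A. \<forall>e\<in>A. \<forall>p\<in>fst c. \<forall>q\<in>fst d. \<forall>r\<in>fst e.
        eps d e q r ** eps c d p q = eps c e p r) \<and>
     (\<forall>c\<in>A. \<forall>c'\<in>A. \<forall>d\<in>A. \<forall>d'\<in>A. \<forall>p\<in>fst c \<inter> fst c'. \<forall>q\<in>fst d \<inter> fst d'.
        eps c' d' p q = jac d d' (snd d q) ** eps c d p q ** jac c' c (snd c' p)) \<and>
     (\<forall>c\<in>A. \<forall>d\<in>A. \<forall>i j. smooth_fun (chart_img c \<times> chart_img d) (eps_coord eps c d i j))"

definition dx :: "((real^'n) \<times> (real^'n) \<Rightarrow> real) \<Rightarrow> 'n::finite \<Rightarrow> (real^'n) \<times> (real^'n) \<Rightarrow> real" where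
  "dx f k z = frechet_derivative f (at z) (axis k 1, 0)"

definition dy :: "((real^'n) \<times> (real^'n) \<Rightarrow> real) \<Rightarrow> 'n::finite \<Rightarrow> (real^'n) \<times> (real^'n) \<Rightarrow> real" where
  "dy f a z = frechet_derivative f (at z) (0, axis a 1)"

definition A_coeff where
  "A_coeff eps c d i k j z =
     dx (eps_coord eps c d i j) k z +
     (\<Sum>a\<in>UNIV. dy (eps_coord eps c d i j) a z * eps_coord eps c d a k z)"

definition curvR where
  "curvR eps c d i k j z = A_coeff eps c d i k j z - A_coeff eps c d i j k z"

definition flat where
  "flat A eps \<longleftrightarrow> (\<forall>c\<in>A. \<forall>d\<in>A. \<forall>x\<in>chart_img c. \<forall>y\<in>chart_img d. \<forall>i k j.
       curvR eps c d i k j (x, y) = 0)"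

definition Gamma where
  "Gamma eps c i j k x = dy (eps_coord eps c c i k) j (x, x)"

definition B_coeff where
  "B_coeff eps c i r j k x =
     frechet_derivative (Gamma eps c i k j) (at x) (axis r 1) +
     (\<Sum>a\<in>UNIV. Gamma eps c a k r x * Gamma eps c i a j x)"

definition curvR2 where
  "curvR2 eps c i r j k x = B_coeff eps c i r j k x - B_coeff eps c i j r k x"

definition R2_zero where
  "R2_zero A eps \<longleftrightarrow> (\<forall>c\<in>A. \<forall>x\<in>chart_img c. \<forall>i r j k. curvR2 eps c i r j k x = 0)"

end

theory Submission
  imports Defs
begin

text \<open>
  Fix a base point \<open>p\<^sub>0\<close>.  The composition law gives
  \<open>\<epsilon>\<^sup>p\<^sup>,\<^sup>q = \<epsilon>\<^sup>p\<^sup>0\<^sup>,\<^sup>q \<circ> \<epsilon>\<^sup>p\<^sup>,\<^sup>p\<^sup>0\<close>, so in charts \<open>\<epsilon>(x,y) = F(y) G(x)\<close>, where the columns of the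
  \<open>frame\<close> \<open>F\<close> are the parallel vector fields \<open>X\<^sub>u = \<epsilon>\<^sup>p\<^sup>0\<^sup>,\<^sup>\<cdot>(e\<^sub>u)\<close> and \<open>G = F\<^sup>-\<^sup>1\<close>.  Let \<open>S\<^sup>m\<^sub>u\<^sub>v\<close>
  be the structure functions of this frame, \<open>[X\<^sub>v, X\<^sub>u] = S\<^sup>m\<^sub>u\<^sub>v X\<^sub>m\<close>.  Two identities of
  index calculus carry the proof:
    (1) \<open>\<R>(\<epsilon>)(x,y)\<close> contracted with \<open>F(x) \<otimes> F(x)\<close> equals \<open>F(y) (S(y) - S(x))\<close>;
    (2) \<open>\<R>\<^sub>2(\<epsilon>)(x)\<close> contracted with \<open>F(x) \<otimes> F(x)\<close> equals \<open>F(x) \<partial>S(x)\<close>.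
  Since \<open>F\<close> is invertible, \<open>\<epsilon>\<close> is flat iff \<open>S\<close> is constant, and \<open>\<R>\<^sub>2 = 0\<close> iff \<open>\<partial>S = 0\<close>.  The
  structure functions are independent of the chart (naturality of the Lie bracket), so
  \<open>\<partial>S = 0\<close> makes \<open>S\<close> a locally constant function on \<open>M\<close>, constant because \<open>M\<close> is connected.
\<close>

lemma sum_delta_right[simp]:
  fixes f :: "'n::finite \<Rightarrow> real"
  shows "(\<Sum>m\<in>UNIV. f m * (if m = u then 1 else 0)) = f u"
    and "(\<Sum>m\<in>UNIV. f m * (if u = m then 1 else 0)) = f u"
  by (simp_all add: if_distrib if_distribR cong: if_cong)

lemma sum_delta_left[simp]:
  fixes f :: "'n::finite \<Rightarrow> real"
  shows "(\<Sum>m\<in>UNIV. (if m = u then 1 else 0) * f m) = f u"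
    and "(\<Sum>m\<in>UNIV. (if u = m then 1 else 0) * f m) = f u"
  by (simp_all add: if_distrib if_distribR cong: if_cong)

lemma sum_axis_left[simp]: "(\<Sum>k'\<in>UNIV. (axis k (1::real)) $ k' * f k') = f k"
proof -
  have "(\<Sum>k'\<in>UNIV. (axis k (1::real)) $ k' * f k') = (\<Sum>k'\<in>UNIV. if k' = k then f k' else 0)"
    by (rule sum.cong) (auto simp: axis_def)
  thus ?thesis by simp
qed

section \<open>Symmetry of second derivatives\<close>

text \<open>Symmetry of mixed partial derivatives (Schwarz).  The library provides no such
  theorem, so we prove it by the classical argument: the second difference
  \<open>g(z+hu+hv) - g(z+hu) - g(z+hv) + g(z)\<close> is, by the mean value theorem applied twice, \<open>h\<^sup>2\<close>
  times a mixed second derivative at a nearby point, in either order.\<close>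

lemma second_difference_mvt:
  fixes g :: "'a::euclidean_space \<Rightarrow> real"
  assumes S: "open S" and h: "h > 0"
    and inS: "\<And>s t. 0 \<le> s \<Longrightarrow> s \<le> h \<Longrightarrow> 0 \<le> t \<Longrightarrow> t \<le> h \<Longrightarrow> z + s *\<^sub>R u + t *\<^sub>R v \<in> S"
    and dg: "\<And>w. w \<in> S \<Longrightarrow> (g has_derivative g' w) (at w)"
    and du: "\<And>w. w \<in> S \<Longrightarrow> ((\<lambda>w. g' w u) has_derivative hu w) (at w)"
  shows "\<exists>s t. 0 < s \<and> s < h \<and> 0 < t \<and> t < h \<and>
     g (z + h *\<^sub>R u + h *\<^sub>R v) - g (z + h *\<^sub>R u) - g (z + h *\<^sub>R v) + g z = h * h * hu (z + s *\<^sub>R u + t *\<^sub>R v) v"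
proof -
  define \<phi> where "\<phi> s = g (z + s *\<^sub>R u + h *\<^sub>R v) - g (z + s *\<^sub>R u)" for s
  have lin: "linear (g' w)" if "w \<in> S" for w using dg[OF that] has_derivative_linear by blast
  have "\<exists>x\<in>{0<..<h}. \<phi> h - \<phi> 0 = (\<lambda>d. d * (g' (z + x *\<^sub>R u + h *\<^sub>R v) u - g' (z + x *\<^sub>R u) u)) (h - 0)"
  proof (rule mvt_simple[OF h])
    fix x assume x: "0 \<le> x" "x \<le> h"
    have m1: "z + x *\<^sub>R u + h *\<^sub>R v \<in> S" using inS[OF x] h by simp
    have m2: "z + x *\<^sub>R u \<in> S" using inS[OF x, of 0] h by simp
    have i1: "((\<lambda>s. z + s *\<^sub>R u + h *\<^sub>R v) has_derivative (\<lambda>d. d *\<^sub>R u)) (at x within {0..h})"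
      by (auto intro!: derivative_eq_intros)
    have i2: "((\<lambda>s. z + s *\<^sub>R u) has_derivative (\<lambda>d. d *\<^sub>R u)) (at x within {0..h})"
      by (auto intro!: derivative_eq_intros)
    have "((\<lambda>s. g (z + s *\<^sub>R u + h *\<^sub>R v) - g (z + s *\<^sub>R u)) has_derivative
       (\<lambda>d. g' (z + x *\<^sub>R u + h *\<^sub>R v) (d *\<^sub>R u) - g' (z + x *\<^sub>R u) (d *\<^sub>R u))) (at x within {0..h})"
      by (intro has_derivative_diff has_derivative_compose[OF i1 dg[OF m1]] has_derivative_compose[OF i2 dg[OF m2]])
    moreover have "(\<lambda>d. g' (z + x *\<^sub>R u + h *\<^sub>R v) (d *\<^sub>R u) - g' (z + x *\<^sub>R u) (d *\<^sub>R u))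
       = (\<lambda>d. d * (g' (z + x *\<^sub>R u + h *\<^sub>R v) u - g' (z + x *\<^sub>R u) u))"
      using linear_scale[OF lin[OF m1]] linear_scale[OF lin[OF m2]] by (auto simp: algebra_simps)
    ultimately show "(\<phi> has_derivative (\<lambda>d. d * (g' (z + x *\<^sub>R u + h *\<^sub>R v) u - g' (z + x *\<^sub>R u) u))) (at x within {0..h})"
      unfolding \<phi>_def by simp
  qed
  then obtain s where s: "0 < s" "s < h" and e1: "\<phi> h - \<phi> 0 = h * (g' (z + s *\<^sub>R u + h *\<^sub>R v) u - g' (z + s *\<^sub>R u) u)"
    by auto
  define \<psi> where "\<psi> t = g' (z + s *\<^sub>R u + t *\<^sub>R v) u" for t
  have "\<exists>x\<in>{0<..<h}. \<psi> h - \<psi> 0 = (\<lambda>d. d * hu (z + s *\<^sub>R u + x *\<^sub>R v) v) (h - 0)"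
  proof (rule mvt_simple[OF h])
    fix x assume x: "0 \<le> x" "x \<le> h"
    have m1: "z + s *\<^sub>R u + x *\<^sub>R v \<in> S" using inS[of s x] x s by simp
    have i1: "((\<lambda>t. z + s *\<^sub>R u + t *\<^sub>R v) has_derivative (\<lambda>d. d *\<^sub>R v)) (at x within {0..h})"
      by (auto intro!: derivative_eq_intros)
    have lh: "linear (hu (z + s *\<^sub>R u + x *\<^sub>R v))" using du[OF m1] has_derivative_linear by blast
    have "(\<psi> has_derivative (\<lambda>d. hu (z + s *\<^sub>R u + x *\<^sub>R v) (d *\<^sub>R v))) (at x within {0..h})"
      unfolding \<psi>_def by (rule has_derivative_compose[OF i1 du[OF m1]])
    then show "(\<psi> has_derivative (\<lambda>d. d * hu (z + s *\<^sub>R u + x *\<^sub>R v) v)) (at x within {0..h})"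
      using linear_scale[OF lh] by simp
  qed
  then obtain t where t: "0 < t" "t < h" and e2: "\<psi> h - \<psi> 0 = h * hu (z + s *\<^sub>R u + t *\<^sub>R v) v"
    by auto
  have "g (z + h *\<^sub>R u + h *\<^sub>R v) - g (z + h *\<^sub>R u) - g (z + h *\<^sub>R v) + g z = \<phi> h - \<phi> 0"
    unfolding \<phi>_def by (simp add: algebra_simps)
  also have "\<dots> = h * (\<psi> h - \<psi> 0)" using e1 unfolding \<psi>_def by simp
  also have "\<dots> = h * h * hu (z + s *\<^sub>R u + t *\<^sub>R v) v" using e2 by simp
  finally show ?thesis using s t by blast
qed

lemma small_square:
  fixes z u v :: "'a::real_normed_vector"
  assumes d: "d > 0"
  obtains h where "h > 0" "\<And>s t. 0 \<le> s \<Longrightarrow> s \<le> h \<Longrightarrow> 0 \<le> t \<Longrightarrow> t \<le> h \<Longrightarrow> dist (z + s *\<^sub>R u + t *\<^sub>R v) z < d"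
proof
  define h where "h = d / (2 * (norm u + norm v + 1))"
  have pos: "norm u + norm v + 1 > 0" using norm_ge_zero[of u] norm_ge_zero[of v] by linarith
  thus h: "h > 0" unfolding h_def using d by simp
  fix s t assume st: "0 \<le> s" "s \<le> h" "0 \<le> t" "t \<le> h"
  have "dist (z + s *\<^sub>R u + t *\<^sub>R v) z = norm (s *\<^sub>R u + t *\<^sub>R v)" by (simp add: dist_norm)
  also have "\<dots> \<le> s * norm u + t * norm v" using norm_triangle_ineq[of "s *\<^sub>R u" "t *\<^sub>R v"] st by simp
  also have "\<dots> \<le> h * (norm u + norm v)" using st by (simp add: distrib_left add_mono mult_right_mono)
  also have "\<dots> \<le> h * (norm u + norm v + 1)" using h by simp
  also have "\<dots> = d / 2" unfolding h_def using pos by (simp add: field_simps)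
  also have "\<dots> < d" using d by simp
  finally show "dist (z + s *\<^sub>R u + t *\<^sub>R v) z < d" .
qed

lemma mixed_partials_commute:
  fixes g :: "'a::euclidean_space \<Rightarrow> real"
  assumes S: "open S" "z \<in> S"
    and dg: "\<And>w. w \<in> S \<Longrightarrow> (g has_derivative g' w) (at w)"
    and du: "\<And>w. w \<in> S \<Longrightarrow> ((\<lambda>w. g' w u) has_derivative hu w) (at w)"
    and dv: "\<And>w. w \<in> S \<Longrightarrow> ((\<lambda>w. g' w v) has_derivative hv w) (at w)"
    and cu: "continuous (at z) (\<lambda>w. hu w v)"
    and cv: "continuous (at z) (\<lambda>w. hv w u)"
  shows "hu z v = hv z u"
proof (rule ccontr)
  assume ne: "hu z v \<noteq> hv z u"
  define e where "e = \<bar>hu z v - hv z u\<bar> / 2"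
  have e: "e > 0" using ne by (simp add: e_def)
  obtain d1 where d1: "d1 > 0" "\<And>w. dist w z < d1 \<Longrightarrow> dist (hu w v) (hu z v) < e"
    using cu e unfolding continuous_at_eps_delta by metis
  obtain d2 where d2: "d2 > 0" "\<And>w. dist w z < d2 \<Longrightarrow> dist (hv w u) (hv z u) < e"
    using cv e unfolding continuous_at_eps_delta by metis
  obtain d3 where d3: "d3 > 0" "ball z d3 \<subseteq> S" using S open_contains_ball by blast
  define d where "d = min d1 (min d2 d3)"
  have d: "d > 0" using d1 d2 d3 by (simp add: d_def)
  obtain h where h: "h > 0"
    and small: "\<And>s t. 0 \<le> s \<Longrightarrow> s \<le> h \<Longrightarrow> 0 \<le> t \<Longrightarrow> t \<le> h \<Longrightarrow> dist (z + s *\<^sub>R u + t *\<^sub>R v) z < d"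
    using small_square[OF d] by blast
  have inS: "z + s *\<^sub>R u + t *\<^sub>R v \<in> S" if "0 \<le> s" "s \<le> h" "0 \<le> t" "t \<le> h" for s t
    using small[OF that] d3(2) by (auto simp: d_def dist_commute)
  have inS': "z + s *\<^sub>R v + t *\<^sub>R u \<in> S" if "0 \<le> s" "s \<le> h" "0 \<le> t" "t \<le> h" for s t
    using inS[of t s] that by (simp add: algebra_simps)
  obtain s t where st: "0 < s" "s < h" "0 < t" "t < h" and
    E1: "g (z + h *\<^sub>R u + h *\<^sub>R v) - g (z + h *\<^sub>R u) - g (z + h *\<^sub>R v) + g z = h * h * hu (z + s *\<^sub>R u + t *\<^sub>R v) v"
    using second_difference_mvt[OF S(1) h inS dg du] by blast
  obtain s' t' where st': "0 < s'" "s' < h" "0 < t'" "t' < h" and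
    E2: "g (z + h *\<^sub>R v + h *\<^sub>R u) - g (z + h *\<^sub>R v) - g (z + h *\<^sub>R u) + g z = h * h * hv (z + s' *\<^sub>R v + t' *\<^sub>R u) u"
    using second_difference_mvt[OF S(1) h inS' dg dv] by blast
  have "h * h * hu (z + s *\<^sub>R u + t *\<^sub>R v) v = h * h * hv (z + s' *\<^sub>R v + t' *\<^sub>R u) u"
    using E1 E2 by (simp add: algebra_simps)
  hence eq: "hu (z + s *\<^sub>R u + t *\<^sub>R v) v = hv (z + s' *\<^sub>R v + t' *\<^sub>R u) u" using h by simp
  have a1: "dist (hu (z + s *\<^sub>R u + t *\<^sub>R v) v) (hu z v) < e"
    using small[of s t] st by (intro d1(2)) (auto simp: d_def)
  have a2: "dist (hv (z + s' *\<^sub>R v + t' *\<^sub>R u) u) (hv z u) < e"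
    using small[of t' s'] st' by (intro d2(2)) (auto simp: d_def algebra_simps)
  have "\<bar>hu z v - hv z u\<bar> < 2 * e" using a1 a2 eq by (simp add: dist_real_def)
  thus False by (simp add: e_def)
qed

definition pd :: "('a::real_normed_vector \<Rightarrow> real) \<Rightarrow> 'a \<Rightarrow> 'a \<Rightarrow> real" where
  "pd f v z = frechet_derivative f (at z) v"

abbreviation ax :: "'n::finite \<Rightarrow> real^'n" where "ax k \<equiv> axis k 1"

lemma frechet_derivative_cong_open:
  assumes "open S" "z \<in> S" "\<And>w. w \<in> S \<Longrightarrow> f w = g w"
  shows "frechet_derivative f (at z) = frechet_derivative g (at z)"
proof -
  have "\<And>D. (f has_derivative D) (at z) \<longleftrightarrow> (g has_derivative D) (at z)"
  proof
    fix D assume "(f has_derivative D) (at z)"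
    thus "(g has_derivative D) (at z)" by (rule has_derivative_transform_within_open[OF _ assms(1,2)]) (use assms(3) in auto)
  next
    fix D assume "(g has_derivative D) (at z)"
    thus "(f has_derivative D) (at z)" by (rule has_derivative_transform_within_open[OF _ assms(1,2)]) (use assms(3) in auto)
  qed
  thus ?thesis unfolding frechet_derivative_def by simp
qed

lemma pd_from_has_derivative: "(f has_derivative D) (at z) \<Longrightarrow> pd f v z = D v"
  unfolding pd_def using frechet_derivative_at by metis

lemma differentiable_on_open_iff: "open S \<Longrightarrow> f differentiable_on S \<longleftrightarrow> (\<forall>z\<in>S. f differentiable (at z))"
  unfolding differentiable_on_def using at_within_open by metis

lemma Ck_cong_open:
  assumes "open S" "\<And>w. w \<in> S \<Longrightarrow> f w = g w" "Ck k S f"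
  shows "Ck k S g"
  using assms
proof (induction k arbitrary: f g)
  case 0
  then show ?case using continuous_on_cong[of S S f g] by simp
next
  case (Suc k)
  have d: "g differentiable_on S"
    unfolding differentiable_on_open_iff[OF Suc.prems(1)]
  proof
    fix z assume z: "z \<in> S"
    then obtain D where "(f has_derivative D) (at z)"
      using Suc.prems(3) unfolding Ck.simps differentiable_on_open_iff[OF Suc.prems(1)] differentiable_def by blast
    hence "(g has_derivative D) (at z)"
      by (rule has_derivative_transform_within_open[OF _ Suc.prems(1) z]) (use Suc.prems(2) in auto)
    thus "g differentiable at z" unfolding differentiable_def by blast
  qed
  have "Ck k S (\<lambda>x. frechet_derivative g (at x) b)" if "b \<in> Basis" for b
  proof (rule Suc.IH[OF Suc.prems(1) _ ])
    show "Ck k S (\<lambda>x. frechet_derivative f (at x) b)" using Suc.prems(3) that by simp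
    show "frechet_derivative f (at w) b = frechet_derivative g (at w) b" if "w \<in> S" for w
      using frechet_derivative_cong_open[OF Suc.prems(1) that Suc.prems(2)] by simp
  qed
  then show ?case using d by simp
qed

lemma smooth_fun_continuous_on: "smooth_fun S f \<Longrightarrow> continuous_on S f"
  unfolding smooth_fun_def by (metis Ck.simps(1))

lemma smooth_fun_differentiable: "smooth_fun S f \<Longrightarrow> open S \<Longrightarrow> z \<in> S \<Longrightarrow> f differentiable (at z)"
  unfolding smooth_fun_def by (metis Ck.simps(2) differentiable_on_open_iff)

lemma smooth_fun_has_derivative: "smooth_fun S f \<Longrightarrow> open S \<Longrightarrow> z \<in> S \<Longrightarrow> (f has_derivative frechet_derivative f (at z)) (at z)"
  using smooth_fun_differentiable frechet_derivative_works by blast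

lemma smooth_fun_frechet_partial: "smooth_fun S f \<Longrightarrow> b \<in> Basis \<Longrightarrow> smooth_fun S (\<lambda>x. frechet_derivative f (at x) b)"
  unfolding smooth_fun_def by (metis Ck.simps(2))

lemma smooth_fun_pd_Basis: "smooth_fun S f \<Longrightarrow> b \<in> Basis \<Longrightarrow> smooth_fun S (pd f b)"
  using smooth_fun_frechet_partial[of S f b] by (simp add: pd_def[abs_def])

lemma smooth_fun_pd: "smooth_fun S f \<Longrightarrow> smooth_fun S (pd f (ax k))"
  using smooth_fun_pd_Basis[of S f "ax k"] by simp

lemma linear_coordinate_expansion:
  fixes L :: "real^'n \<Rightarrow> real"
  assumes "linear L"
  shows "L h = (\<Sum>k\<in>UNIV. h $ k * L (ax k))"
proof -
  have "L h = L (\<Sum>k\<in>UNIV. h $ k *\<^sub>R ax k)"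
    using basis_expansion[of h] by (simp add: scalar_mult_eq_scaleR)
  also have "\<dots> = (\<Sum>k\<in>UNIV. h $ k * L (ax k))"
    using assms by (simp add: linear_sum linear_scale)
  finally show ?thesis .
qed

lemma smooth_fun_has_derivative_coords:
  fixes f :: "real^'n \<Rightarrow> real"
  assumes "smooth_fun S f" "open S" "z \<in> S"
  shows "(f has_derivative (\<lambda>h. \<Sum>k\<in>UNIV. h $ k * pd f (ax k) z)) (at z)"
proof -
  have d: "(f has_derivative frechet_derivative f (at z)) (at z)" using smooth_fun_has_derivative assms by blast
  have "linear (frechet_derivative f (at z))" using d has_derivative_linear by blast
  hence "frechet_derivative f (at z) = (\<lambda>h. \<Sum>k\<in>UNIV. h $ k * pd f (ax k) z)"
    using linear_coordinate_expansion by (auto simp: pd_def)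
  thus ?thesis using d by simp
qed

lemma Ck_slice_snd:
  fixes f :: "('a::euclidean_space \<times> 'b::euclidean_space) \<Rightarrow> real"
  assumes "open P" "open V" "\<And>y. y \<in> V \<Longrightarrow> (x0, y) \<in> P" "Ck k P f"
  shows "Ck k V (\<lambda>y. f (x0, y))"
  using assms(4)
proof (induction k arbitrary: f)
  case 0
  have "continuous_on V (\<lambda>y. (x0, y))" by (intro continuous_intros)
  moreover have "(\<lambda>y. (x0, y)) ` V \<subseteq> P" using assms(3) by auto
  ultimately show ?case using 0 continuous_on_subset by (auto intro: continuous_on_compose2[of P f])
next
  case (Suc k)
  have fd: "f differentiable (at (x0, y))" if "y \<in> V" for y
    using Suc.prems assms(3)[OF that] differentiable_on_open_iff[OF assms(1)] by auto
  have hd: "((\<lambda>y. f (x0, y)) has_derivative (\<lambda>h. frechet_derivative f (at (x0, y)) (0, h))) (at y)" if "y \<in> V" for y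
  proof -
    have "((\<lambda>y. (x0, y)) has_derivative (\<lambda>h. (0, h))) (at y)"
      by (auto intro!: derivative_eq_intros)
    from diff_chain_at[OF this frechet_derivative_works[THEN iffD1, OF fd[OF that]]]
    show ?thesis by (simp add: o_def)
  qed
  have "(\<lambda>y. f (x0, y)) differentiable_on V"
    using hd differentiable_on_open_iff[OF assms(2)] differentiable_def by blast
  moreover have "Ck k V (\<lambda>y. frechet_derivative (\<lambda>y. f (x0, y)) (at y) b)" if "b \<in> Basis" for b
  proof (rule Ck_cong_open[OF assms(2)])
    have "(0, b) \<in> (Basis :: ('a \<times> 'b) set)" using that by (simp add: Basis_prod_def)
    hence "Ck k P (\<lambda>z. frechet_derivative f (at z) (0, b))" using Suc.prems by simp
    thus "Ck k V (\<lambda>y. frechet_derivative f (at (x0, y)) (0, b))" using Suc.IH by blast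
    show "frechet_derivative f (at (x0, w)) (0, b) = frechet_derivative (\<lambda>y. f (x0, y)) (at w) b" if "w \<in> V" for w
      using frechet_derivative_at[OF hd[OF that]] by metis
  qed
  ultimately show ?case by simp
qed

lemma Ck_slice_fst:
  fixes f :: "('a::euclidean_space \<times> 'b::euclidean_space) \<Rightarrow> real"
  assumes "open P" "open V" "\<And>x. x \<in> V \<Longrightarrow> (x, y0) \<in> P" "Ck k P f"
  shows "Ck k V (\<lambda>x. f (x, y0))"
  using assms(4)
proof (induction k arbitrary: f)
  case 0
  have "continuous_on V (\<lambda>x. (x, y0))" by (intro continuous_intros)
  moreover have "(\<lambda>x. (x, y0)) ` V \<subseteq> P" using assms(3) by auto
  ultimately show ?case using 0 continuous_on_subset by (auto intro: continuous_on_compose2[of P f])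
next
  case (Suc k)
  have fd: "f differentiable (at (x, y0))" if "x \<in> V" for x
    using Suc.prems assms(3)[OF that] differentiable_on_open_iff[OF assms(1)] by auto
  have hd: "((\<lambda>x. f (x, y0)) has_derivative (\<lambda>h. frechet_derivative f (at (x, y0)) (h, 0))) (at x)" if "x \<in> V" for x
  proof -
    have "((\<lambda>x. (x, y0)) has_derivative (\<lambda>h. (h, 0))) (at x)"
      by (auto intro!: derivative_eq_intros)
    from diff_chain_at[OF this frechet_derivative_works[THEN iffD1, OF fd[OF that]]]
    show ?thesis by (simp add: o_def)
  qed
  have "(\<lambda>x. f (x, y0)) differentiable_on V"
    using hd differentiable_on_open_iff[OF assms(2)] differentiable_def by blast
  moreover have "Ck k V (\<lambda>x. frechet_derivative (\<lambda>x. f (x, y0)) (at x) b)" if "b \<in> Basis" for b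
  proof (rule Ck_cong_open[OF assms(2)])
    have "(b, 0) \<in> (Basis :: ('a \<times> 'b) set)" using that by (simp add: Basis_prod_def)
    hence "Ck k P (\<lambda>z. frechet_derivative f (at z) (b, 0))" using Suc.prems by simp
    thus "Ck k V (\<lambda>x. frechet_derivative f (at (x, y0)) (b, 0))" using Suc.IH by blast
    show "frechet_derivative f (at (w, y0)) (b, 0) = frechet_derivative (\<lambda>x. f (x, y0)) (at w) b" if "w \<in> V" for w
      using frechet_derivative_at[OF hd[OF that]] by metis
  qed
  ultimately show ?case by simp
qed

lemma smooth_slice_snd:
  "open P \<Longrightarrow> open V \<Longrightarrow> (\<And>y. y \<in> V \<Longrightarrow> (x0, y) \<in> P) \<Longrightarrow> smooth_fun P f \<Longrightarrow> smooth_fun V (\<lambda>y. f (x0, y))"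
  unfolding smooth_fun_def using Ck_slice_snd by blast

lemma smooth_slice_fst:
  "open P \<Longrightarrow> open V \<Longrightarrow> (\<And>x. x \<in> V \<Longrightarrow> (x, y0) \<in> P) \<Longrightarrow> smooth_fun P f \<Longrightarrow> smooth_fun V (\<lambda>x. f (x, y0))"
  unfolding smooth_fun_def using Ck_slice_fst by blast

lemma smooth_pd_commute:
  fixes g :: "real^'n \<Rightarrow> real"
  assumes "smooth_fun S g" "open S" "z \<in> S"
  shows "pd (pd g (ax a)) (ax b) z = pd (pd g (ax b)) (ax a) z"
proof -
  let ?g' = "\<lambda>w. frechet_derivative g (at w)"
  have sa: "smooth_fun S (pd g (ax a))" and sb: "smooth_fun S (pd g (ax b))"
    using assms smooth_fun_pd by blast+
  have "pd (pd g (ax a)) (ax b) z = frechet_derivative (\<lambda>w. ?g' w (ax a)) (at z) (ax b)"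
    by (simp add: pd_def[abs_def])
  also have "\<dots> = frechet_derivative (\<lambda>w. ?g' w (ax b)) (at z) (ax a)"
  proof (rule mixed_partials_commute[OF assms(2,3)])
    show "(g has_derivative ?g' w) (at w)" if "w \<in> S" for w using smooth_fun_has_derivative assms that by blast
    show "((\<lambda>w. ?g' w (ax a)) has_derivative frechet_derivative (\<lambda>w. ?g' w (ax a)) (at w)) (at w)" if "w \<in> S" for w
      using smooth_fun_has_derivative[OF sa assms(2) that] by (simp add: pd_def[abs_def])
    show "((\<lambda>w. ?g' w (ax b)) has_derivative frechet_derivative (\<lambda>w. ?g' w (ax b)) (at w)) (at w)" if "w \<in> S" for w
      using smooth_fun_has_derivative[OF sb assms(2) that] by (simp add: pd_def[abs_def])
    have "continuous_on S (pd (pd g (ax a)) (ax b))" using smooth_fun_continuous_on smooth_fun_pd[OF sa] by blast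
    thus "continuous (at z) (\<lambda>w. frechet_derivative (\<lambda>w. ?g' w (ax a)) (at w) (ax b))"
      using assms continuous_on_eq_continuous_at by (fastforce simp: pd_def[abs_def])
    have "continuous_on S (pd (pd g (ax b)) (ax a))" using smooth_fun_continuous_on smooth_fun_pd[OF sb] by blast
    thus "continuous (at z) (\<lambda>w. frechet_derivative (\<lambda>w. ?g' w (ax b)) (at w) (ax a))"
      using assms continuous_on_eq_continuous_at by (fastforce simp: pd_def[abs_def])
  qed
  also have "\<dots> = pd (pd g (ax b)) (ax a) z"
    by (simp add: pd_def[abs_def])
  finally show ?thesis .
qed

text \<open>Stating derivatives through their coordinate gradient turns the differentiation rules
  into equations between arrays, which is what the index calculus below needs.\<close>

definition has_grad :: "(real^'n::finite \<Rightarrow> real) \<Rightarrow> real^'n \<Rightarrow> ('n \<Rightarrow> real) \<Rightarrow> bool" where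
  "has_grad f y P \<longleftrightarrow> (f has_derivative (\<lambda>h. \<Sum>k\<in>UNIV. h $ k * P k)) (at y)"

lemma has_grad_smooth: "smooth_fun V f \<Longrightarrow> open V \<Longrightarrow> y \<in> V \<Longrightarrow> has_grad f y (\<lambda>k. pd f (ax k) y)"
  unfolding has_grad_def by (rule smooth_fun_has_derivative_coords)

lemma has_grad_pd: "has_grad f y P \<Longrightarrow> pd f (ax k) y = P k"
  unfolding has_grad_def by (drule pd_from_has_derivative[where v="ax k"]) simp

lemma has_grad_unique: "has_grad f y P \<Longrightarrow> has_grad f y Q \<Longrightarrow> P = Q"
  using has_grad_pd by (metis ext)

lemma has_grad_const: "has_grad (\<lambda>y. c) y (\<lambda>k. 0)"
  unfolding has_grad_def by simp

lemma has_grad_sum: "(\<And>m. has_grad (f m) y (P m)) \<Longrightarrow> has_grad (\<lambda>y. \<Sum>m\<in>UNIV. f m y) y (\<lambda>k. \<Sum>m\<in>UNIV. P m k)"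
  unfolding has_grad_def
proof -
  assume "\<And>m. (f m has_derivative (\<lambda>h. \<Sum>k\<in>UNIV. h $ k * P m k)) (at y)"
  hence "((\<lambda>y. \<Sum>m\<in>UNIV. f m y) has_derivative (\<lambda>h. \<Sum>m\<in>UNIV. \<Sum>k\<in>UNIV. h $ k * P m k)) (at y)"
    by (intro has_derivative_sum) auto
  moreover have "(\<lambda>h. \<Sum>m\<in>UNIV. \<Sum>k\<in>UNIV. h $ k * P m k) = (\<lambda>h. \<Sum>k\<in>UNIV. h $ k * (\<Sum>m\<in>UNIV. P m k))"
    by (rule ext, subst sum.swap) (simp add: sum_distrib_left)
  ultimately show "((\<lambda>y. \<Sum>m\<in>UNIV. f m y) has_derivative (\<lambda>h. \<Sum>k\<in>UNIV. h $ k * (\<Sum>m\<in>UNIV. P m k))) (at y)"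
    by simp
qed

lemma has_grad_mult: "has_grad f y P \<Longrightarrow> has_grad g y Q \<Longrightarrow> has_grad (\<lambda>y. f y * g y) y (\<lambda>k. P k * g y + f y * Q k)"
  unfolding has_grad_def
  by (drule (1) has_derivative_mult) (simp add: sum_distrib_left sum_distrib_right sum.distrib algebra_simps)

lemma has_grad_diff: "has_grad f y P \<Longrightarrow> has_grad g y Q \<Longrightarrow> has_grad (\<lambda>y. f y - g y) y (\<lambda>k. P k - Q k)"
  unfolding has_grad_def by (drule (1) has_derivative_diff) (simp add: sum_subtractf algebra_simps)

lemma has_grad_cong: "open V \<Longrightarrow> y \<in> V \<Longrightarrow> (\<And>w. w \<in> V \<Longrightarrow> f w = g w) \<Longrightarrow> has_grad f y P \<Longrightarrow> has_grad g y P"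
  unfolding has_grad_def using has_derivative_transform_within_open[of f _ y UNIV V g] by blast

lemma has_derivative_vec_components:
  fixes t :: "real^'n::finite \<Rightarrow> real^'m::finite"
  assumes "\<And>b. ((\<lambda>y. t y $ b) has_derivative (\<lambda>h. D h $ b)) (at y0)"
  shows "(t has_derivative D) (at y0)"
proof (subst has_derivative_componentwise_within, intro ballI)
  fix i :: "real^'m" assume "i \<in> Basis"
  then obtain b where i: "i = axis b 1" using axis_inverse by blast
  show "((\<lambda>x. t x \<bullet> i) has_derivative (\<lambda>x. D x \<bullet> i)) (at y0)"
    using assms[of b] unfolding i by (simp add: cart_eq_inner_axis[symmetric])
qed

lemma has_grad_chain:
  fixes t :: "real^'n::finite \<Rightarrow> real^'m::finite"
  assumes tD: "\<And>b. has_grad (\<lambda>y. t y $ b) y0 (Q b)" and g: "has_grad g (t y0) P"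
  shows "has_grad (\<lambda>y. g (t y)) y0 (\<lambda>a. \<Sum>b\<in>UNIV. P b * Q b a)"
proof -
  let ?D = "\<lambda>h. \<chi> b. \<Sum>a\<in>UNIV. h $ a * Q b a"
  have "(t has_derivative ?D) (at y0)"
    by (rule has_derivative_vec_components) (use tD in \<open>simp add: has_grad_def\<close>)
  from has_derivative_compose[OF this g[unfolded has_grad_def]]
  have "((\<lambda>y. g (t y)) has_derivative (\<lambda>h. \<Sum>b\<in>UNIV. (\<Sum>a\<in>UNIV. h $ a * Q b a) * P b)) (at y0)"
    by simp
  moreover have "(\<lambda>h. \<Sum>b\<in>UNIV. (\<Sum>a\<in>UNIV. h $ a * Q b a) * P b) = (\<lambda>h. \<Sum>a\<in>UNIV. h $ a * (\<Sum>b\<in>UNIV. P b * Q b a))"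
  proof
    fix h :: "real^'n"
    have "(\<Sum>b\<in>UNIV. (\<Sum>a\<in>UNIV. h $ a * Q b a) * P b) = (\<Sum>b\<in>UNIV. \<Sum>a\<in>UNIV. h $ a * (P b * Q b a))"
      by (simp add: sum_distrib_left sum_distrib_right algebra_simps)
    also have "\<dots> = (\<Sum>a\<in>UNIV. \<Sum>b\<in>UNIV. h $ a * (P b * Q b a))" by (rule sum.swap)
    finally show "(\<Sum>b\<in>UNIV. (\<Sum>a\<in>UNIV. h $ a * Q b a) * P b) = (\<Sum>a\<in>UNIV. h $ a * (\<Sum>b\<in>UNIV. P b * Q b a))"
      by (simp add: sum_distrib_left)
  qed
  ultimately show ?thesis unfolding has_grad_def by simp
qed

lemma has_grad_coord: fixes x :: "real^'n::finite" shows "has_grad (\<lambda>z. z $ b) x (\<lambda>l. if b = l then 1 else 0)"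
proof -
  have d: "((\<lambda>z::real^'n. z $ b) has_derivative (\<lambda>h. h $ b)) (at x)"
    by (simp add: bounded_linear_vec_nth bounded_linear_imp_has_derivative)
  have eq: "(\<lambda>h::real^'n. \<Sum>l\<in>UNIV. h $ l * (if b = l then 1 else 0)) = (\<lambda>h. h $ b)" by simp
  show ?thesis unfolding has_grad_def eq by (rule d)
qed

lemma has_derivative_snd_comp: "(f has_derivative D) (at (snd z)) \<Longrightarrow> ((\<lambda>z. f (snd z)) has_derivative (\<lambda>h. D (snd h))) (at z)"
  using has_derivative_compose[OF has_derivative_snd[OF has_derivative_ident]] by blast

lemma has_derivative_fst_comp: "(f has_derivative D) (at (fst z)) \<Longrightarrow> ((\<lambda>z. f (fst z)) has_derivative (\<lambda>h. D (fst h))) (at z)"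
  using has_derivative_compose[OF has_derivative_fst[OF has_derivative_ident]] by blast
section \<open>Index calculus for a frame and its inverse\<close>

lemma contract_right:
  fixes X :: "'n::finite \<Rightarrow> real" and G F :: "'n \<Rightarrow> 'n \<Rightarrow> real"
  assumes GF: "\<And>b u. (\<Sum>j\<in>UNIV. G b j * F j u) = (if b = u then 1 else 0)"
  shows "(\<Sum>j\<in>UNIV. (\<Sum>b\<in>UNIV. X b * G b j) * F j u) = X u"
proof -
  have "(\<Sum>j\<in>UNIV. (\<Sum>b\<in>UNIV. X b * G b j) * F j u) = (\<Sum>j\<in>UNIV. \<Sum>b\<in>UNIV. X b * G b j * F j u)"
    by (simp add: sum_distrib_right)
  also have "\<dots> = (\<Sum>b\<in>UNIV. \<Sum>j\<in>UNIV. X b * G b j * F j u)" by (rule sum.swap)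
  also have "\<dots> = (\<Sum>b\<in>UNIV. X b * (\<Sum>j\<in>UNIV. G b j * F j u))" by (simp add: sum_distrib_left mult.assoc)
  also have "\<dots> = X u" by (simp add: GF)
  finally show ?thesis .
qed

lemma contract_left:
  fixes Y :: "'n::finite \<Rightarrow> real" and G F :: "'n \<Rightarrow> 'n \<Rightarrow> real"
  assumes FG: "\<And>i a. (\<Sum>m\<in>UNIV. F i m * G m a) = (if i = a then 1 else 0)"
  shows "(\<Sum>m\<in>UNIV. F i m * (\<Sum>a\<in>UNIV. G m a * Y a)) = Y i"
proof -
  have "(\<Sum>m\<in>UNIV. F i m * (\<Sum>a\<in>UNIV. G m a * Y a)) = (\<Sum>m\<in>UNIV. \<Sum>a\<in>UNIV. F i m * G m a * Y a)"
    by (simp add: sum_distrib_left mult.assoc)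
  also have "\<dots> = (\<Sum>a\<in>UNIV. \<Sum>m\<in>UNIV. F i m * G m a * Y a)" by (rule sum.swap)
  also have "\<dots> = (\<Sum>a\<in>UNIV. (\<Sum>m\<in>UNIV. F i m * G m a) * Y a)" by (simp add: sum_distrib_right)
  also have "\<dots> = Y i" by (simp add: FG)
  finally show ?thesis .
qed

lemma contract1_eq_zero:
  fixes F G :: "'n::finite \<Rightarrow> 'n \<Rightarrow> real" and X :: "'n \<Rightarrow> real"
  assumes GF: "\<And>i j. (\<Sum>m\<in>UNIV. G i m * F m j) = (if i = j then 1 else 0)"
    and Z: "\<And>i. (\<Sum>m\<in>UNIV. F i m * X m) = 0"
  shows "X m = 0"
proof -
  have "X m = (\<Sum>i\<in>UNIV. G m i * (\<Sum>m'\<in>UNIV. F i m' * X m'))"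
    using contract_left[of G F m X] GF by simp
  also have "\<dots> = 0" by (simp add: Z)
  finally show ?thesis .
qed

lemma contract2_eq_zero:
  fixes F G :: "'n::finite \<Rightarrow> 'n \<Rightarrow> real" and T :: "'n \<Rightarrow> 'n \<Rightarrow> real"
  assumes FG: "\<And>i j. (\<Sum>m\<in>UNIV. F i m * G m j) = (if i = j then 1 else 0)"
    and Z: "\<And>u v. (\<Sum>k\<in>UNIV. \<Sum>j\<in>UNIV. T k j * F j u * F k v) = 0"
  shows "T k j = 0"
proof -
  have inner: "(\<Sum>u\<in>UNIV. (\<Sum>k'\<in>UNIV. \<Sum>j'\<in>UNIV. T k' j' * F j' u * F k' v) * G u j)
      = (\<Sum>k'\<in>UNIV. F k' v * T k' j)" for v
  proof -
    have "(\<Sum>u\<in>UNIV. (\<Sum>k'\<in>UNIV. \<Sum>j'\<in>UNIV. T k' j' * F j' u * F k' v) * G u j)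
        = (\<Sum>u\<in>UNIV. \<Sum>k'\<in>UNIV. \<Sum>j'\<in>UNIV. F k' v * (T k' j' * (F j' u * G u j)))"
      by (simp add: sum_distrib_left sum_distrib_right algebra_simps)
    also have "\<dots> = (\<Sum>k'\<in>UNIV. \<Sum>j'\<in>UNIV. \<Sum>u\<in>UNIV. F k' v * (T k' j' * (F j' u * G u j)))"
      by (subst sum.swap) (rule sum.cong[OF refl], rule sum.swap)
    also have "\<dots> = (\<Sum>k'\<in>UNIV. F k' v * T k' j)"
      by (simp add: sum_distrib_left[symmetric] FG)
    finally show ?thesis .
  qed
  have "T k j = (\<Sum>k'\<in>UNIV. (\<Sum>v\<in>UNIV. F k' v * G v k) * T k' j)"
    by (simp add: FG)
  also have "\<dots> = (\<Sum>v\<in>UNIV. \<Sum>k'\<in>UNIV. F k' v * G v k * T k' j)"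
    by (subst sum.swap) (simp add: sum_distrib_right)
  also have "\<dots> = (\<Sum>v\<in>UNIV. (\<Sum>k'\<in>UNIV. F k' v * T k' j) * G v k)"
    by (rule sum.cong[OF refl]) (simp add: sum_distrib_left sum_distrib_right mult_ac)
  also have "\<dots> = (\<Sum>v\<in>UNIV. (\<Sum>u\<in>UNIV. (\<Sum>k'\<in>UNIV. \<Sum>j'\<in>UNIV. T k' j' * F j' u * F k' v) * G u j) * G v k)"
    by (simp add: inner)
  also have "\<dots> = 0" by (simp add: Z)
  finally show ?thesis .
qed

section \<open>Formal curvature expressions of a product splitting\<close>

text \<open>Below \<open>F\<close> is the matrix of a frame (its columns \<open>X\<^sub>u = F\<^sup>i\<^sub>u \<partial>\<^sub>i\<close> are vector fields),
  \<open>G = F\<^sup>-\<^sup>1\<close>, and \<open>dF k i j = \<partial>\<^sub>k F\<^sup>i\<^sub>j\<close>, \<open>ddF r k i j = \<partial>\<^sub>r \<partial>\<^sub>k F\<^sup>i\<^sub>j\<close>,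
  \<open>dG k i j = \<partial>\<^sub>k G\<^sup>i\<^sub>j\<close> are its derivatives at one point, all treated as plain arrays.
  For the splitting \<open>\<epsilon>(x,y) = F(y) G(x)\<close> the objects of the paper become polynomial
  expressions in these arrays, which we name here.\<close>

type_synonym 'n arr2 = "'n \<Rightarrow> 'n \<Rightarrow> real"
type_synonym 'n arr3 = "'n \<Rightarrow> 'n \<Rightarrow> 'n \<Rightarrow> real"
type_synonym 'n arr4 = "'n \<Rightarrow> 'n \<Rightarrow> 'n \<Rightarrow> 'n \<Rightarrow> real"

definition Gamma_form :: "'n::finite arr3 \<Rightarrow> 'n arr2 \<Rightarrow> 'n arr3" where
  "Gamma_form dF G k i j = (\<Sum>b\<in>UNIV. dF k i b * G b j)"

definition dGamma_form :: "'n::finite arr4 \<Rightarrow> 'n arr3 \<Rightarrow> 'n arr2 \<Rightarrow> 'n arr3 \<Rightarrow> 'n arr4" where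
  "dGamma_form ddF dF G dG r k i j = (\<Sum>b\<in>UNIV. ddF r k i b * G b j + dF k i b * dG r b j)"

definition R2_form :: "'n::finite arr4 \<Rightarrow> 'n arr3 \<Rightarrow> 'n arr2 \<Rightarrow> 'n arr3 \<Rightarrow> 'n arr4" where
  "R2_form ddF dF G dG i r j k =
     (dGamma_form ddF dF G dG r k i j + (\<Sum>a\<in>UNIV. Gamma_form dF G k a r * Gamma_form dF G a i j)) -
     (dGamma_form ddF dF G dG j k i r + (\<Sum>a\<in>UNIV. Gamma_form dF G k a j * Gamma_form dF G a i r))"

text \<open>The Lie bracket \<open>[X\<^sub>v, X\<^sub>u]\<^sup>i\<close> of two frame fields, and its derivative \<open>\<partial>\<^sub>k\<close>.\<close>

definition bracket_form :: "'n::finite arr3 \<Rightarrow> 'n arr2 \<Rightarrow> 'n arr3" where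
  "bracket_form dF F i u v = (\<Sum>a\<in>UNIV. dF a i u * F a v - dF a i v * F a u)"

definition dbracket_form :: "'n::finite arr4 \<Rightarrow> 'n arr3 \<Rightarrow> 'n arr2 \<Rightarrow> 'n arr4" where
  "dbracket_form ddF dF F k i u v =
     (\<Sum>a\<in>UNIV. (ddF k a i u * F a v + dF a i u * dF k a v) - (ddF k a i v * F a u + dF a i v * dF k a u))"

text \<open>The structure functions \<open>S\<^sup>m\<^sub>u\<^sub>v\<close> of the frame, \<open>[X\<^sub>v, X\<^sub>u] = S\<^sup>m\<^sub>u\<^sub>v X\<^sub>m\<close>, and their
  derivative \<open>\<partial>\<^sub>k S\<^sup>m\<^sub>u\<^sub>v\<close>.\<close>

definition struct_form :: "'n::finite arr3 \<Rightarrow> 'n arr2 \<Rightarrow> 'n arr2 \<Rightarrow> 'n arr3" where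
  "struct_form dF F G m u v = (\<Sum>i\<in>UNIV. G m i * bracket_form dF F i u v)"

definition dstruct_form :: "'n::finite arr4 \<Rightarrow> 'n arr3 \<Rightarrow> 'n arr2 \<Rightarrow> 'n arr2 \<Rightarrow> 'n arr3 \<Rightarrow> 'n arr4" where
  "dstruct_form ddF dF F G dG k m u v =
     (\<Sum>i\<in>UNIV. dG k m i * bracket_form dF F i u v + G m i * dbracket_form ddF dF F k i u v)"

text \<open>The coefficient \<open>A\<^sup>i\<^sub>k\<^sub>j(x,y)\<close> of \<open>\<R>(\<epsilon>)\<close> for \<open>\<epsilon>(x,y) = F\<^sub>y G\<^sub>x\<close>, with the derivatives of
  the frame at \<open>y\<close> and of the coframe at \<open>x\<close>.\<close>

definition A_form :: "'n::finite arr2 \<Rightarrow> 'n arr3 \<Rightarrow> 'n arr2 \<Rightarrow> 'n arr3 \<Rightarrow> 'n arr3" where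
  "A_form Fy dFy Gx dGx i k j =
     (\<Sum>m\<in>UNIV. Fy i m * dGx k m j) + (\<Sum>a\<in>UNIV. (\<Sum>m\<in>UNIV. dFy a i m * Gx m j) * (\<Sum>l\<in>UNIV. Fy a l * Gx l k))"

text \<open>Differentiating \<open>G F = 1\<close> gives \<open>\<partial>G = - G (\<partial>F) G\<close>; this is the hypothesis on \<open>dG\<close>
  in the lemmas below.\<close>

lemma inverse_derivative_contract:
  fixes F G :: "'n::finite arr2" and dF dG :: "'n arr3"
  assumes GF: "\<And>i j. (\<Sum>m\<in>UNIV. G i m * F m j) = (if i = j then 1 else 0)"
    and dG: "\<And>k a j. dG k a j = - (\<Sum>i\<in>UNIV. G a i * (\<Sum>m\<in>UNIV. dF k i m * G m j))"
  shows "(\<Sum>j\<in>UNIV. dG r b j * F j u) = - (\<Sum>a\<in>UNIV. G b a * dF r a u)"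
proof -
  have "(\<Sum>j\<in>UNIV. dG r b j * F j u) = - (\<Sum>j\<in>UNIV. (\<Sum>a\<in>UNIV. G b a * (\<Sum>m\<in>UNIV. dF r a m * G m j)) * F j u)"
    by (simp add: dG sum_negf)
  also have "(\<Sum>j\<in>UNIV. (\<Sum>a\<in>UNIV. G b a * (\<Sum>m\<in>UNIV. dF r a m * G m j)) * F j u)
      = (\<Sum>j\<in>UNIV. \<Sum>a\<in>UNIV. G b a * ((\<Sum>m\<in>UNIV. dF r a m * G m j) * F j u))"
    by (simp add: sum_distrib_right mult.assoc)
  also have "\<dots> = (\<Sum>a\<in>UNIV. G b a * (\<Sum>j\<in>UNIV. (\<Sum>m\<in>UNIV. dF r a m * G m j) * F j u))"
    by (subst sum.swap) (simp add: sum_distrib_left)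
  also have "\<dots> = (\<Sum>a\<in>UNIV. G b a * dF r a u)" by (simp add: contract_right[OF GF])
  finally show ?thesis .
qed

lemma frame_dcoframe:
  fixes F G :: "'n::finite arr2" and dF dG :: "'n arr3"
  assumes FG: "\<And>i j. (\<Sum>m\<in>UNIV. F i m * G m j) = (if i = j then 1 else 0)"
    and dG: "\<And>k a j. dG k a j = - (\<Sum>i\<in>UNIV. G a i * (\<Sum>m\<in>UNIV. dF k i m * G m j))"
  shows "(\<Sum>m\<in>UNIV. F i m * dG k m j) = - Gamma_form dF G k i j"
proof -
  have "(\<Sum>m\<in>UNIV. F i m * dG k m j) = - (\<Sum>m\<in>UNIV. F i m * (\<Sum>a\<in>UNIV. G m a * (\<Sum>l\<in>UNIV. dF k a l * G l j)))"
    by (simp add: dG sum_negf)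
  also have "\<dots> = - Gamma_form dF G k i j" by (simp add: contract_left[OF FG] Gamma_form_def)
  finally show ?thesis .
qed

lemma Gamma_form_frame:
  fixes F G :: "'n::finite arr2" and dF :: "'n arr3"
  assumes GF: "\<And>i j. (\<Sum>m\<in>UNIV. G i m * F m j) = (if i = j then 1 else 0)"
  shows "(\<Sum>j\<in>UNIV. Gamma_form dF G a i j * F j u) = dF a i u"
  unfolding Gamma_form_def by (rule contract_right[OF GF])

lemma dGamma_form_frame:
  fixes F G :: "'n::finite arr2" and dF dG :: "'n arr3" and ddF :: "'n arr4"
  assumes GF: "\<And>i j. (\<Sum>m\<in>UNIV. G i m * F m j) = (if i = j then 1 else 0)"
    and dG: "\<And>k a j. dG k a j = - (\<Sum>i\<in>UNIV. G a i * (\<Sum>m\<in>UNIV. dF k i m * G m j))"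
  shows "(\<Sum>j\<in>UNIV. dGamma_form ddF dF G dG r k i j * F j u)
       = ddF r k i u - (\<Sum>a\<in>UNIV. Gamma_form dF G k i a * dF r a u)"
proof -
  have "(\<Sum>j\<in>UNIV. dGamma_form ddF dF G dG r k i j * F j u) = (\<Sum>j\<in>UNIV. (\<Sum>b\<in>UNIV. ddF r k i b * G b j) * F j u)
     + (\<Sum>j\<in>UNIV. (\<Sum>b\<in>UNIV. dF k i b * dG r b j) * F j u)"
    unfolding dGamma_form_def by (simp add: sum.distrib distrib_right)
  also have "(\<Sum>j\<in>UNIV. (\<Sum>b\<in>UNIV. ddF r k i b * G b j) * F j u) = ddF r k i u"
    by (rule contract_right[OF GF])
  also have "(\<Sum>j\<in>UNIV. (\<Sum>b\<in>UNIV. dF k i b * dG r b j) * F j u) = (\<Sum>b\<in>UNIV. dF k i b * (\<Sum>j\<in>UNIV. dG r b j * F j u))"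
    by (simp add: sum_distrib_left sum_distrib_right mult.assoc) (rule sum.swap)
  also have "\<dots> = - (\<Sum>b\<in>UNIV. \<Sum>a\<in>UNIV. dF k i b * G b a * dF r a u)"
    unfolding inverse_derivative_contract[where dF=dF and dG=dG, OF GF dG] by (simp add: sum_negf sum_distrib_left mult.assoc)
  also have "(\<Sum>b\<in>UNIV. \<Sum>a\<in>UNIV. dF k i b * G b a * dF r a u) = (\<Sum>a\<in>UNIV. Gamma_form dF G k i a * dF r a u)"
    by (subst sum.swap) (simp add: Gamma_form_def sum_distrib_right)
  finally show ?thesis by simp
qed

lemma Gamma_square_frame:
  fixes F G :: "'n::finite arr2" and dF :: "'n arr3"
  assumes GF: "\<And>i j. (\<Sum>m\<in>UNIV. G i m * F m j) = (if i = j then 1 else 0)"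
  shows "(\<Sum>r\<in>UNIV. \<Sum>j\<in>UNIV. (\<Sum>a\<in>UNIV. Gamma_form dF G k a r * Gamma_form dF G a i j) * F j u * F r v)
       = (\<Sum>a\<in>UNIV. dF k a v * dF a i u)"
proof -
  let ?\<Gamma> = "Gamma_form dF G"
  have "(\<Sum>r\<in>UNIV. \<Sum>j\<in>UNIV. (\<Sum>a\<in>UNIV. ?\<Gamma> k a r * ?\<Gamma> a i j) * F j u * F r v)
     = (\<Sum>r\<in>UNIV. \<Sum>j\<in>UNIV. \<Sum>a\<in>UNIV. (?\<Gamma> k a r * F r v) * (?\<Gamma> a i j * F j u))"
    by (intro sum.cong refl) (simp add: sum_distrib_left sum_distrib_right mult.commute mult.left_commute)
  also have "\<dots> = (\<Sum>a\<in>UNIV. \<Sum>r\<in>UNIV. \<Sum>j\<in>UNIV. (?\<Gamma> k a r * F r v) * (?\<Gamma> a i j * F j u))"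
    by (subst sum.swap) (rule sum.cong[OF refl], rule sum.swap)
  also have "\<dots> = (\<Sum>a\<in>UNIV. (\<Sum>r\<in>UNIV. ?\<Gamma> k a r * F r v) * (\<Sum>j\<in>UNIV. ?\<Gamma> a i j * F j u))"
    by (simp add: sum_product)
  also have "\<dots> = (\<Sum>a\<in>UNIV. dF k a v * dF a i u)" by (simp add: Gamma_form_frame[OF GF])
  finally show ?thesis .
qed

lemma frame_dstruct_form:
  fixes F G :: "'n::finite arr2" and dF dG :: "'n arr3" and ddF :: "'n arr4"
  assumes FG: "\<And>i j. (\<Sum>m\<in>UNIV. F i m * G m j) = (if i = j then 1 else 0)"
    and dG: "\<And>k a j. dG k a j = - (\<Sum>i\<in>UNIV. G a i * (\<Sum>m\<in>UNIV. dF k i m * G m j))"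
  shows "(\<Sum>m\<in>UNIV. F i m * dstruct_form ddF dF F G dG k m u v)
       = dbracket_form ddF dF F k i u v - (\<Sum>a\<in>UNIV. Gamma_form dF G k i a * bracket_form dF F a u v)"
proof -
  have "(\<Sum>m\<in>UNIV. F i m * dstruct_form ddF dF F G dG k m u v) =
     (\<Sum>m\<in>UNIV. \<Sum>a\<in>UNIV. F i m * dG k m a * bracket_form dF F a u v)
     + (\<Sum>m\<in>UNIV. F i m * (\<Sum>a\<in>UNIV. G m a * dbracket_form ddF dF F k a u v))"
    unfolding dstruct_form_def by (simp add: sum_distrib_left sum.distrib algebra_simps)
  also have "(\<Sum>m\<in>UNIV. \<Sum>a\<in>UNIV. F i m * dG k m a * bracket_form dF F a u v)
      = (\<Sum>a\<in>UNIV. (\<Sum>m\<in>UNIV. F i m * dG k m a) * bracket_form dF F a u v)"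
    by (subst sum.swap) (simp add: sum_distrib_right)
  also have "\<dots> = - (\<Sum>a\<in>UNIV. Gamma_form dF G k i a * bracket_form dF F a u v)"
    unfolding frame_dcoframe[where dF=dF and dG=dG, OF FG dG] by (simp add: sum_negf)
  also have "(\<Sum>m\<in>UNIV. F i m * (\<Sum>a\<in>UNIV. G m a * dbracket_form ddF dF F k a u v)) = dbracket_form ddF dF F k i u v"
    by (rule contract_left[OF FG])
  finally show ?thesis by simp
qed

lemma R2_form_contract:
  fixes F G :: "'n::finite arr2" and dF dG :: "'n arr3" and ddF :: "'n arr4"
  assumes FG: "\<And>i j. (\<Sum>m\<in>UNIV. F i m * G m j) = (if i = j then 1 else 0)"
    and GF: "\<And>i j. (\<Sum>m\<in>UNIV. G i m * F m j) = (if i = j then 1 else 0)"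
    and dG: "\<And>k a j. dG k a j = - (\<Sum>i\<in>UNIV. G a i * (\<Sum>m\<in>UNIV. dF k i m * G m j))"
    and sym: "\<And>r k i j. ddF r k i j = ddF k r i j"
  shows "(\<Sum>r\<in>UNIV. \<Sum>j\<in>UNIV. R2_form ddF dF G dG i r j k * F j u * F r v)
       = (\<Sum>m\<in>UNIV. F i m * dstruct_form ddF dF F G dG k m u v)"
proof -
  let ?\<Gamma> = "Gamma_form dF G" and ?d\<Gamma> = "dGamma_form ddF dF G dG"
  note d\<Gamma>F = dGamma_form_frame[where dF=dF and dG=dG, OF GF dG]
  have LHS: "(\<Sum>r\<in>UNIV. \<Sum>j\<in>UNIV. R2_form ddF dF G dG i r j k * F j u * F r v) =
      (\<Sum>r\<in>UNIV. \<Sum>j\<in>UNIV. ?d\<Gamma> r k i j * F j u * F r v)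
    + (\<Sum>r\<in>UNIV. \<Sum>j\<in>UNIV. (\<Sum>a\<in>UNIV. ?\<Gamma> k a r * ?\<Gamma> a i j) * F j u * F r v)
    - (\<Sum>r\<in>UNIV. \<Sum>j\<in>UNIV. ?d\<Gamma> j k i r * F j u * F r v)
    - (\<Sum>r\<in>UNIV. \<Sum>j\<in>UNIV. (\<Sum>a\<in>UNIV. ?\<Gamma> k a j * ?\<Gamma> a i r) * F j u * F r v)"
    unfolding R2_form_def by (simp add: algebra_simps sum.distrib sum_subtractf)
  have T1: "(\<Sum>r\<in>UNIV. \<Sum>j\<in>UNIV. ?d\<Gamma> r k i j * F j u * F r v)
      = (\<Sum>r\<in>UNIV. F r v * (ddF r k i u - (\<Sum>a\<in>UNIV. ?\<Gamma> k i a * dF r a u)))"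
  proof -
    have "(\<Sum>r\<in>UNIV. \<Sum>j\<in>UNIV. ?d\<Gamma> r k i j * F j u * F r v) = (\<Sum>r\<in>UNIV. F r v * (\<Sum>j\<in>UNIV. ?d\<Gamma> r k i j * F j u))"
      by (simp add: sum_distrib_left mult.commute mult.left_commute)
    thus ?thesis by (simp add: d\<Gamma>F)
  qed
  have T2: "(\<Sum>r\<in>UNIV. \<Sum>j\<in>UNIV. (\<Sum>a\<in>UNIV. ?\<Gamma> k a r * ?\<Gamma> a i j) * F j u * F r v)
      = (\<Sum>a\<in>UNIV. dF k a v * dF a i u)"
    by (rule Gamma_square_frame[OF GF])
  have T3: "(\<Sum>r\<in>UNIV. \<Sum>j\<in>UNIV. ?d\<Gamma> j k i r * F j u * F r v)
      = (\<Sum>j\<in>UNIV. F j u * (ddF j k i v - (\<Sum>a\<in>UNIV. ?\<Gamma> k i a * dF j a v)))"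
  proof -
    have "(\<Sum>r\<in>UNIV. \<Sum>j\<in>UNIV. ?d\<Gamma> j k i r * F j u * F r v) = (\<Sum>j\<in>UNIV. F j u * (\<Sum>r\<in>UNIV. ?d\<Gamma> j k i r * F r v))"
      by (subst sum.swap) (simp add: sum_distrib_left mult.commute mult.left_commute)
    thus ?thesis by (simp add: d\<Gamma>F)
  qed
  have T4: "(\<Sum>r\<in>UNIV. \<Sum>j\<in>UNIV. (\<Sum>a\<in>UNIV. ?\<Gamma> k a j * ?\<Gamma> a i r) * F j u * F r v)
      = (\<Sum>a\<in>UNIV. dF k a u * dF a i v)"
    using Gamma_square_frame[OF GF, where k=k and i=i and u=v and v=u] by (subst sum.swap) (simp add: mult.commute mult.left_commute)
  have GP: "(\<Sum>a\<in>UNIV. ?\<Gamma> k i a * bracket_form dF F a u v) =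
     (\<Sum>r\<in>UNIV. F r v * (\<Sum>a\<in>UNIV. ?\<Gamma> k i a * dF r a u)) - (\<Sum>j\<in>UNIV. F j u * (\<Sum>a\<in>UNIV. ?\<Gamma> k i a * dF j a v))"
  proof -
    have "(\<Sum>a\<in>UNIV. ?\<Gamma> k i a * bracket_form dF F a u v)
        = (\<Sum>a\<in>UNIV. \<Sum>r\<in>UNIV. ?\<Gamma> k i a * dF r a u * F r v) - (\<Sum>a\<in>UNIV. \<Sum>r\<in>UNIV. ?\<Gamma> k i a * dF r a v * F r u)"
      unfolding bracket_form_def by (simp add: sum_distrib_left sum_subtractf algebra_simps)
    also have "\<dots> = (\<Sum>r\<in>UNIV. F r v * (\<Sum>a\<in>UNIV. ?\<Gamma> k i a * dF r a u)) - (\<Sum>r\<in>UNIV. F r u * (\<Sum>a\<in>UNIV. ?\<Gamma> k i a * dF r a v))"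
      by (subst (1 2) sum.swap) (simp add: sum_distrib_left mult.commute mult.left_commute)
    finally show ?thesis .
  qed
  have DP: "dbracket_form ddF dF F k i u v = (\<Sum>r\<in>UNIV. F r v * ddF r k i u) + (\<Sum>a\<in>UNIV. dF k a v * dF a i u)
      - (\<Sum>j\<in>UNIV. F j u * ddF j k i v) - (\<Sum>a\<in>UNIV. dF k a u * dF a i v)"
    unfolding dbracket_form_def by (simp add: sum.distrib sum_subtractf algebra_simps sym[of k])
  show ?thesis
    unfolding LHS T1 T2 T3 T4 frame_dstruct_form[where dF=dF and dG=dG, OF FG dG] GP DP
    by (simp add: right_diff_distrib sum_subtractf)
qed

lemma A_form_coframe_part:
  fixes Fx Gx Fy :: "'n::finite arr2" and dFx dGx :: "'n arr3"
  assumes GFx: "\<And>i j. (\<Sum>m\<in>UNIV. Gx i m * Fx m j) = (if i = j then 1 else 0)"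
    and dGx: "\<And>k a j. dGx k a j = - (\<Sum>i\<in>UNIV. Gx a i * (\<Sum>m\<in>UNIV. dFx k i m * Gx m j))"
  shows "(\<Sum>k\<in>UNIV. \<Sum>j\<in>UNIV. (\<Sum>m\<in>UNIV. Fy i m * dGx k m j) * Fx j u * Fx k v)
       = - (\<Sum>m\<in>UNIV. Fy i m * (\<Sum>a\<in>UNIV. Gx m a * (\<Sum>k\<in>UNIV. dFx k a u * Fx k v)))"
proof -
  have "(\<Sum>k\<in>UNIV. \<Sum>j\<in>UNIV. (\<Sum>m\<in>UNIV. Fy i m * dGx k m j) * Fx j u * Fx k v)
      = (\<Sum>k\<in>UNIV. \<Sum>m\<in>UNIV. Fy i m * Fx k v * (\<Sum>j\<in>UNIV. dGx k m j * Fx j u))"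
  proof (rule sum.cong[OF refl])
    fix k
    have "(\<Sum>j\<in>UNIV. (\<Sum>m\<in>UNIV. Fy i m * dGx k m j) * Fx j u * Fx k v)
        = (\<Sum>j\<in>UNIV. \<Sum>m\<in>UNIV. Fy i m * Fx k v * (dGx k m j * Fx j u))"
      by (simp add: sum_distrib_left sum_distrib_right algebra_simps)
    also have "\<dots> = (\<Sum>m\<in>UNIV. Fy i m * Fx k v * (\<Sum>j\<in>UNIV. dGx k m j * Fx j u))"
      by (subst sum.swap) (simp add: sum_distrib_left)
    finally show "(\<Sum>j\<in>UNIV. (\<Sum>m\<in>UNIV. Fy i m * dGx k m j) * Fx j u * Fx k v)
        = (\<Sum>m\<in>UNIV. Fy i m * Fx k v * (\<Sum>j\<in>UNIV. dGx k m j * Fx j u))" .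
  qed
  also have "\<dots> = (\<Sum>m\<in>UNIV. \<Sum>k\<in>UNIV. - (Fy i m * Fx k v * (\<Sum>a\<in>UNIV. Gx m a * dFx k a u)))"
    unfolding inverse_derivative_contract[where dF=dFx and dG=dGx, OF GFx dGx] by (subst sum.swap) simp
  also have "\<dots> = - (\<Sum>m\<in>UNIV. Fy i m * (\<Sum>a\<in>UNIV. Gx m a * (\<Sum>k\<in>UNIV. dFx k a u * Fx k v)))"
  proof -
    have "(\<Sum>k\<in>UNIV. Fx k v * (\<Sum>a\<in>UNIV. Gx m a * dFx k a u)) = (\<Sum>a\<in>UNIV. Gx m a * (\<Sum>k\<in>UNIV. dFx k a u * Fx k v))" for m
    proof -
      have "(\<Sum>k\<in>UNIV. Fx k v * (\<Sum>a\<in>UNIV. Gx m a * dFx k a u)) = (\<Sum>k\<in>UNIV. \<Sum>a\<in>UNIV. Gx m a * (dFx k a u * Fx k v))"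
        by (simp add: sum_distrib_left algebra_simps)
      also have "\<dots> = (\<Sum>a\<in>UNIV. Gx m a * (\<Sum>k\<in>UNIV. dFx k a u * Fx k v))"
        by (subst sum.swap) (simp add: sum_distrib_left)
      finally show ?thesis .
    qed
    thus ?thesis by (simp add: sum_negf sum_distrib_left[symmetric] mult.assoc)
  qed
  finally show ?thesis .
qed

lemma A_form_frame_part:
  fixes Fx Gx Fy :: "'n::finite arr2" and dFy :: "'n arr3"
  assumes GFx: "\<And>i j. (\<Sum>m\<in>UNIV. Gx i m * Fx m j) = (if i = j then 1 else 0)"
  shows "(\<Sum>k\<in>UNIV. \<Sum>j\<in>UNIV. (\<Sum>a\<in>UNIV. (\<Sum>m\<in>UNIV. dFy a i m * Gx m j) * (\<Sum>l\<in>UNIV. Fy a l * Gx l k)) * Fx j u * Fx k v)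
       = (\<Sum>a\<in>UNIV. dFy a i u * Fy a v)"
proof -
  let ?P = "\<lambda>a j. (\<Sum>m\<in>UNIV. dFy a i m * Gx m j)" and ?Q = "\<lambda>a k. (\<Sum>l\<in>UNIV. Fy a l * Gx l k)"
  have "(\<Sum>k\<in>UNIV. \<Sum>j\<in>UNIV. (\<Sum>a\<in>UNIV. ?P a j * ?Q a k) * Fx j u * Fx k v)
      = (\<Sum>k\<in>UNIV. \<Sum>j\<in>UNIV. \<Sum>a\<in>UNIV. (?P a j * Fx j u) * (?Q a k * Fx k v))"
    by (rule sum.cong[OF refl])+ (simp add: sum_distrib_left sum_distrib_right algebra_simps)
  also have "\<dots> = (\<Sum>a\<in>UNIV. \<Sum>k\<in>UNIV. \<Sum>j\<in>UNIV. (?P a j * Fx j u) * (?Q a k * Fx k v))"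
    by (subst sum.swap) (rule sum.cong[OF refl], rule sum.swap)
  also have "\<dots> = (\<Sum>a\<in>UNIV. (\<Sum>j\<in>UNIV. ?P a j * Fx j u) * (\<Sum>k\<in>UNIV. ?Q a k * Fx k v))"
    by (rule sum.cong[OF refl]) (simp add: sum_product mult.commute)
  also have "\<dots> = (\<Sum>a\<in>UNIV. dFy a i u * Fy a v)" by (simp add: contract_right[OF GFx])
  finally show ?thesis .
qed

lemma curvR_form_contract:
  fixes Fx Gx Fy Gy :: "'n::finite arr2" and dFx dGx dFy :: "'n arr3"
  assumes GFx: "\<And>i j. (\<Sum>m\<in>UNIV. Gx i m * Fx m j) = (if i = j then 1 else 0)"
    and dGx: "\<And>k a j. dGx k a j = - (\<Sum>i\<in>UNIV. Gx a i * (\<Sum>m\<in>UNIV. dFx k i m * Gx m j))"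
    and FGy: "\<And>i j. (\<Sum>m\<in>UNIV. Fy i m * Gy m j) = (if i = j then 1 else 0)"
  shows "(\<Sum>k\<in>UNIV. \<Sum>j\<in>UNIV. (A_form Fy dFy Gx dGx i k j - A_form Fy dFy Gx dGx i j k) * Fx j u * Fx k v)
       = (\<Sum>m\<in>UNIV. Fy i m * (struct_form dFy Fy Gy m u v - struct_form dFx Fx Gx m u v))"
proof -
  let ?A = "A_form Fy dFy Gx dGx i"
  have antisym: "(\<Sum>k\<in>UNIV. \<Sum>j\<in>UNIV. (?A k j - ?A j k) * Fx j u * Fx k v)
     = (\<Sum>k\<in>UNIV. \<Sum>j\<in>UNIV. ?A k j * Fx j u * Fx k v) - (\<Sum>k\<in>UNIV. \<Sum>j\<in>UNIV. ?A k j * Fx j v * Fx k u)"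
  proof -
    have "(\<Sum>k\<in>UNIV. \<Sum>j\<in>UNIV. ?A j k * Fx j u * Fx k v) = (\<Sum>k\<in>UNIV. \<Sum>j\<in>UNIV. ?A k j * Fx j v * Fx k u)"
      by (subst sum.swap) (simp add: mult.commute mult.left_commute)
    thus ?thesis by (simp add: left_diff_distrib sum_subtractf)
  qed
  have A_contract: "(\<Sum>k\<in>UNIV. \<Sum>j\<in>UNIV. ?A k j * Fx j u * Fx k v) =
     - (\<Sum>m\<in>UNIV. Fy i m * (\<Sum>a\<in>UNIV. Gx m a * (\<Sum>k\<in>UNIV. dFx k a u * Fx k v))) + (\<Sum>a\<in>UNIV. dFy a i u * Fy a v)" for u v
    unfolding A_form_def A_form_coframe_part[where dFx=dFx and dGx=dGx and Fy=Fy, OF GFx dGx, symmetric]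
      A_form_frame_part[where Fy=Fy and dFy=dFy, OF GFx, symmetric]
    by (simp add: distrib_right sum.distrib)
  have Sy: "(\<Sum>m\<in>UNIV. Fy i m * struct_form dFy Fy Gy m u v) = bracket_form dFy Fy i u v"
    unfolding struct_form_def by (rule contract_left[OF FGy])
  have Sx: "struct_form dFx Fx Gx m u v = (\<Sum>a\<in>UNIV. Gx m a * (\<Sum>k\<in>UNIV. dFx k a u * Fx k v))
      - (\<Sum>a\<in>UNIV. Gx m a * (\<Sum>k\<in>UNIV. dFx k a v * Fx k u))" for m
    unfolding struct_form_def bracket_form_def by (simp add: sum_subtractf right_diff_distrib)
  have By: "bracket_form dFy Fy i u v = (\<Sum>a\<in>UNIV. dFy a i u * Fy a v) - (\<Sum>a\<in>UNIV. dFy a i v * Fy a u)"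
    unfolding bracket_form_def by (simp add: sum_subtractf)
  show ?thesis
    unfolding antisym A_contract right_diff_distrib sum_subtractf Sy Sx By
    by simp
qed

text \<open>Naturality of the bracket under a change of coordinates.  \<open>J\<close> is the Jacobian of the
  coordinate change at the point, \<open>T\<close> a left inverse of it (the Jacobian of the inverse change),
  and \<open>dJ b i m = \<partial>\<^sub>b J\<^sup>i\<^sub>m\<close> is symmetric in \<open>b, m\<close>.  The frame in new coordinates is \<open>J F\<close>, and
  its derivative is given by the chain and product rules.\<close>

lemma bracket_form_chart_change:
  fixes F J T :: "'n::finite arr2" and dF dJ :: "'n arr3"
  assumes TJ: "\<And>b l. (\<Sum>a\<in>UNIV. T b a * J a l) = (if b = l then 1 else 0)"
    and sym: "\<And>b i m. dJ b i m = dJ m i b"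
  defines "F' \<equiv> \<lambda>i j. \<Sum>m\<in>UNIV. J i m * F m j"
    and "dF' \<equiv> \<lambda>a i j. \<Sum>m\<in>UNIV. (\<Sum>b\<in>UNIV. dJ b i m * T b a) * F m j + J i m * (\<Sum>b\<in>UNIV. dF b m j * T b a)"
  shows "bracket_form dF' F' i u v = (\<Sum>m\<in>UNIV. J i m * bracket_form dF F m u v)"
proof -
  have TF': "(\<Sum>a\<in>UNIV. T b a * F' a v) = F b v" for b v
  proof -
    have "(\<Sum>a\<in>UNIV. T b a * F' a v) = (\<Sum>l\<in>UNIV. \<Sum>a\<in>UNIV. T b a * J a l * F l v)"
      unfolding F'_def by (subst sum.swap) (simp add: sum_distrib_left mult.assoc)
    also have "\<dots> = (\<Sum>l\<in>UNIV. (\<Sum>a\<in>UNIV. T b a * J a l) * F l v)" by (simp add: sum_distrib_right)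
    also have "\<dots> = F b v" by (simp add: TJ)
    finally show ?thesis .
  qed
  have dF'F': "(\<Sum>a\<in>UNIV. dF' a i u * F' a v) = (\<Sum>m\<in>UNIV. \<Sum>b\<in>UNIV. (dJ b i m * F m u + J i m * dF b m u) * F b v)" for u v
  proof -
    let ?c = "\<lambda>m b. dJ b i m * F m u + J i m * dF b m u"
    have e: "dF' a i u = (\<Sum>m\<in>UNIV. \<Sum>b\<in>UNIV. ?c m b * T b a)" for a
      unfolding dF'_def by (rule sum.cong[OF refl]) (simp add: sum_distrib_left sum_distrib_right sum.distrib algebra_simps)
    have "(\<Sum>a\<in>UNIV. dF' a i u * F' a v) = (\<Sum>a\<in>UNIV. \<Sum>m\<in>UNIV. \<Sum>b\<in>UNIV. ?c m b * (T b a * F' a v))"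
      unfolding e by (simp add: sum_distrib_right mult.assoc)
    also have "\<dots> = (\<Sum>m\<in>UNIV. \<Sum>b\<in>UNIV. \<Sum>a\<in>UNIV. ?c m b * (T b a * F' a v))"
      by (subst sum.swap) (rule sum.cong[OF refl], rule sum.swap)
    also have "\<dots> = (\<Sum>m\<in>UNIV. \<Sum>b\<in>UNIV. ?c m b * F b v)"
      by (simp add: sum_distrib_left[symmetric] TF')
    finally show ?thesis .
  qed
  have dJ_swap: "(\<Sum>m\<in>UNIV. \<Sum>b\<in>UNIV. dJ b i m * F m u * F b v) = (\<Sum>m\<in>UNIV. \<Sum>b\<in>UNIV. dJ b i m * F m v * F b u)"
  proof -
    have "(\<Sum>m\<in>UNIV. \<Sum>b\<in>UNIV. dJ b i m * F m v * F b u) = (\<Sum>b\<in>UNIV. \<Sum>m\<in>UNIV. dJ m i b * F b u * F m v)"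
      by (subst sum.swap) (simp add: sym[of _ i] mult.commute mult.left_commute)
    thus ?thesis by simp
  qed
  have "bracket_form dF' F' i u v = (\<Sum>a\<in>UNIV. dF' a i u * F' a v) - (\<Sum>a\<in>UNIV. dF' a i v * F' a u)"
    unfolding bracket_form_def by (simp add: sum_subtractf)
  also have "\<dots> = ((\<Sum>m\<in>UNIV. \<Sum>b\<in>UNIV. dJ b i m * F m u * F b v) + (\<Sum>m\<in>UNIV. J i m * (\<Sum>b\<in>UNIV. dF b m u * F b v)))
     - ((\<Sum>m\<in>UNIV. \<Sum>b\<in>UNIV. dJ b i m * F m v * F b u) + (\<Sum>m\<in>UNIV. J i m * (\<Sum>b\<in>UNIV. dF b m v * F b u)))"
    unfolding dF'F' by (simp add: sum.distrib distrib_right sum_distrib_left mult.assoc)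
  also have "\<dots> = (\<Sum>m\<in>UNIV. J i m * bracket_form dF F m u v)"
    unfolding dJ_swap bracket_form_def by (simp add: sum_subtractf right_diff_distrib sum_distrib_left)
  finally show ?thesis .
qed

text \<open>Consequently the structure functions are invariant: they are scalar functions on \<open>M\<close>.
  Here \<open>G'\<close> is the inverse of the new frame \<open>J F\<close>, and \<open>G\<close> the inverse of \<open>F\<close>.\<close>

lemma struct_form_chart_change:
  fixes F G G' J T :: "'n::finite arr2" and dF dJ :: "'n arr3"
  assumes FG: "\<And>i j. (\<Sum>m\<in>UNIV. F i m * G m j) = (if i = j then 1 else 0)"
    and TJ: "\<And>b l. (\<Sum>a\<in>UNIV. T b a * J a l) = (if b = l then 1 else 0)"
    and sym: "\<And>b i m. dJ b i m = dJ m i b"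
    and G'F': "\<And>i j. (\<Sum>m\<in>UNIV. G' i m * (\<Sum>m'\<in>UNIV. J m m' * F m' j)) = (if i = j then 1 else 0)"
  shows "struct_form (\<lambda>a i j. \<Sum>m\<in>UNIV. (\<Sum>b\<in>UNIV. dJ b i m * T b a) * F m j + J i m * (\<Sum>b\<in>UNIV. dF b m j * T b a))
              (\<lambda>i j. \<Sum>m\<in>UNIV. J i m * F m j) G' n u v = struct_form dF F G n u v" (is "?S' = _")
proof -
  have G'J: "(\<Sum>i\<in>UNIV. G' n i * J i m) = G n m" for m
  proof -
    have "(\<Sum>l\<in>UNIV. (\<Sum>i\<in>UNIV. G' n i * J i l) * F l j) = (\<Sum>i\<in>UNIV. \<Sum>l\<in>UNIV. G' n i * J i l * F l j)" for j
      by (subst sum.swap) (simp add: sum_distrib_right)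
    hence "(\<Sum>l\<in>UNIV. (\<Sum>i\<in>UNIV. G' n i * J i l) * F l j) = (if n = j then 1 else 0)" for j
      using G'F'[of n j] by (simp add: sum_distrib_left mult.assoc)
    hence "G n m = (\<Sum>j\<in>UNIV. (\<Sum>l\<in>UNIV. (\<Sum>i\<in>UNIV. G' n i * J i l) * F l j) * G j m)"
      by simp
    also have "\<dots> = (\<Sum>i\<in>UNIV. G' n i * J i m)"
      by (rule contract_right[OF FG])
    finally show ?thesis by simp
  qed
  have "?S' = (\<Sum>i\<in>UNIV. G' n i * (\<Sum>m\<in>UNIV. J i m * bracket_form dF F m u v))"
    unfolding struct_form_def bracket_form_chart_change[OF TJ sym] ..
  also have "\<dots> = (\<Sum>m\<in>UNIV. \<Sum>i\<in>UNIV. G' n i * J i m * bracket_form dF F m u v)"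
    by (subst sum.swap) (simp add: sum_distrib_left mult.assoc)
  also have "\<dots> = (\<Sum>m\<in>UNIV. (\<Sum>i\<in>UNIV. G' n i * J i m) * bracket_form dF F m u v)"
    by (simp add: sum_distrib_right)
  also have "\<dots> = struct_form dF F G n u v" by (simp add: G'J struct_form_def)
  finally show ?thesis .
qed
section \<open>Atlases and splittings\<close>

locale splitting_atlas =
  fixes A :: "('m::topological_space, 'n::finite) chart set"
    and eps :: "('m, 'n) chart \<Rightarrow> ('m, 'n) chart \<Rightarrow> 'm \<Rightarrow> 'm \<Rightarrow> real^'n^'n"
  assumes atlas: "smooth_atlas A" and split: "is_splitting A eps"
begin

lemma chart_domain_open: "c \<in> A \<Longrightarrow> open (fst c)"
  using atlas by (auto simp: smooth_atlas_def)

lemma chart_img_open: "c \<in> A \<Longrightarrow> open (chart_img c)"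
  using atlas by (auto simp: smooth_atlas_def)

lemma chart_inj: "c \<in> A \<Longrightarrow> inj_on (snd c) (fst c)"
  using atlas by (auto simp: smooth_atlas_def)

lemma chart_continuous: "c \<in> A \<Longrightarrow> continuous_on (fst c) (snd c)"
  using atlas by (auto simp: smooth_atlas_def)

lemma chart_inv_continuous: "c \<in> A \<Longrightarrow> continuous_on (chart_img c) (chart_inv c)"
  using atlas by (auto simp: smooth_atlas_def)

lemma atlas_covers: "\<exists>c\<in>A. p \<in> fst c"
  using atlas by (auto simp: smooth_atlas_def)

definition chart_overlap :: "('m, 'n) chart \<Rightarrow> ('m, 'n) chart \<Rightarrow> (real^'n) set" where
  "chart_overlap c d = snd c ` (fst c \<inter> fst d)"

lemma transition_smooth: "c \<in> A \<Longrightarrow> d \<in> A \<Longrightarrow> smooth_fun (chart_overlap c d) (\<lambda>z. transition c d z $ i)"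
  using atlas by (auto simp: smooth_atlas_def chart_overlap_def)

lemma chart_inv_chart: "c \<in> A \<Longrightarrow> p \<in> fst c \<Longrightarrow> chart_inv c (snd c p) = p"
  using chart_inj by (simp add: chart_inv_def)

lemma chart_chart_inv: "x \<in> chart_img c \<Longrightarrow> snd c (chart_inv c x) = x"
  by (simp add: chart_inv_def chart_img_def f_inv_into_f)

lemma chart_inv_in_domain: "x \<in> chart_img c \<Longrightarrow> chart_inv c x \<in> fst c"
  by (simp add: chart_inv_def chart_img_def inv_into_into)

lemma chart_img_memI: "p \<in> fst c \<Longrightarrow> snd c p \<in> chart_img c"
  by (simp add: chart_img_def)

text \<open>Charts are homeomorphisms onto open sets, so they map open sets to open sets.\<close>

lemma chart_open_image: "c \<in> A \<Longrightarrow> open V \<Longrightarrow> V \<subseteq> fst c \<Longrightarrow> open (snd c ` V)"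
proof -
  assume c: "c \<in> A" and V: "open V" "V \<subseteq> fst c"
  have "snd c ` V = chart_img c \<inter> chart_inv c -` V"
  proof
    show "snd c ` V \<subseteq> chart_img c \<inter> chart_inv c -` V"
      using V chart_inv_chart[OF c] by (auto simp: chart_img_def)
    show "chart_img c \<inter> chart_inv c -` V \<subseteq> snd c ` V"
    proof
      fix x assume "x \<in> chart_img c \<inter> chart_inv c -` V"
      hence "x = snd c (chart_inv c x)" "chart_inv c x \<in> V" using chart_chart_inv[of x c] by auto
      thus "x \<in> snd c ` V" by (metis image_eqI)
    qed
  qed
  moreover have "open (chart_inv c -` V \<inter> chart_img c)"
    using continuous_on_open_vimage[OF chart_img_open[OF c]] chart_inv_continuous[OF c] V by blast
  ultimately show ?thesis by (simp add: Int_commute)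
qed

lemma chart_open_preimage: "c \<in> A \<Longrightarrow> open B \<Longrightarrow> open (fst c \<inter> snd c -` B)"
proof -
  assume c: "c \<in> A" and B: "open B"
  have "open (snd c -` B \<inter> fst c)"
    using continuous_on_open_vimage[OF chart_domain_open[OF c]] chart_continuous[OF c] B by blast
  thus ?thesis by (simp add: Int_commute)
qed

lemma chart_img_prod_open: "c \<in> A \<Longrightarrow> d \<in> A \<Longrightarrow> open (chart_img c \<times> chart_img d)"
  using chart_img_open open_Times by blast

lemma eps_coord_smooth: "c \<in> A \<Longrightarrow> d \<in> A \<Longrightarrow> smooth_fun (chart_img c \<times> chart_img d) (eps_coord eps c d i j)"
  using split by (auto simp: is_splitting_def)

lemma eps_compose: "c \<in> A \<Longrightarrow> d \<in> A \<Longrightarrow> e \<in> A \<Longrightarrow> p \<in> fst c \<Longrightarrow> q \<in> fst d \<Longrightarrow> r \<in> fst e \<Longrightarrow>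
   eps d e q r ** eps c d p q = eps c e p r"
  using split unfolding is_splitting_def by blast

lemma eps_refl: "c \<in> A \<Longrightarrow> p \<in> fst c \<Longrightarrow> eps c c p p = mat 1"
  using split unfolding is_splitting_def by blast

lemma eps_chart_change: "c \<in> A \<Longrightarrow> c' \<in> A \<Longrightarrow> d \<in> A \<Longrightarrow> d' \<in> A \<Longrightarrow> p \<in> fst c \<inter> fst c' \<Longrightarrow> q \<in> fst d \<inter> fst d' \<Longrightarrow>
   eps c' d' p q = jac d d' (snd d q) ** eps c d p q ** jac c' c (snd c' p)"
  using split unfolding is_splitting_def by blast

lemma jac_id: assumes c: "c \<in> A" and x: "x \<in> chart_img c" shows "jac c c x = mat 1"
proof -
  have "frechet_derivative (\<lambda>w. transition c c w $ i) (at x) (ax a) = (if i = a then 1 else 0)" for i a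
  proof -
    have "has_grad (\<lambda>w. transition c c w $ i) x (\<lambda>l. if i = l then 1 else 0)"
      by (rule has_grad_cong[OF chart_img_open[OF c] x _ has_grad_coord]) (simp add: transition_def chart_chart_inv)
    from has_grad_pd[OF this, of a] show ?thesis by (simp add: pd_def)
  qed
  thus ?thesis by (simp add: jac_def mat_def vec_eq_iff)
qed

definition tjac :: "('m, 'n) chart \<Rightarrow> ('m, 'n) chart \<Rightarrow> 'n \<Rightarrow> 'n \<Rightarrow> real^'n \<Rightarrow> real" where
  "tjac c d i m z = pd (\<lambda>w. transition c d w $ i) (ax m) z"

lemma chart_overlap_open: "c \<in> A \<Longrightarrow> d \<in> A \<Longrightarrow> open (chart_overlap c d)"
  unfolding chart_overlap_def
  by (rule chart_open_image) (simp_all add: open_Int chart_domain_open)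

lemma chart_overlap_memI: "q \<in> fst c \<Longrightarrow> q \<in> fst d \<Longrightarrow> snd c q \<in> chart_overlap c d"
  by (simp add: chart_overlap_def)

lemma chart_overlap_inv: "c \<in> A \<Longrightarrow> z \<in> chart_overlap c d \<Longrightarrow>
    chart_inv c z \<in> fst c \<inter> fst d \<and> snd c (chart_inv c z) = z"
  by (auto simp: chart_overlap_def chart_inv_chart)

lemma transition_overlap: "c \<in> A \<Longrightarrow> d \<in> A \<Longrightarrow> z \<in> chart_overlap c d \<Longrightarrow>
    transition c d z \<in> chart_overlap d c \<and> chart_inv d (transition c d z) = chart_inv c z"
  using chart_overlap_inv[of c z d] chart_inv_chart[of d]
  by (auto simp: transition_def chart_overlap_def)

lemma transition_roundtrip: "c \<in> A \<Longrightarrow> d \<in> A \<Longrightarrow> z \<in> chart_overlap c d \<Longrightarrow>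
    transition d c (transition c d z) = z"
  using transition_overlap[of c d z] chart_overlap_inv[of c z d] by (simp add: transition_def)

lemma tjac_smooth: "c \<in> A \<Longrightarrow> d \<in> A \<Longrightarrow> smooth_fun (chart_overlap c d) (tjac c d i m)"
  unfolding tjac_def[abs_def] by (rule smooth_fun_pd[OF transition_smooth])

lemma has_grad_transition: "c \<in> A \<Longrightarrow> d \<in> A \<Longrightarrow> z \<in> chart_overlap c d \<Longrightarrow>
    has_grad (\<lambda>w. transition c d w $ i) z (\<lambda>m. tjac c d i m z)"
  unfolding tjac_def by (rule has_grad_smooth[OF transition_smooth chart_overlap_open])

lemma jac_eq_tjac: "jac c d z $ i $ m = tjac c d i m z"
  by (simp add: jac_def tjac_def pd_def)

lemma tjac_inverse:
  assumes c: "c \<in> A" and d: "d \<in> A" and q: "q \<in> fst c" "q \<in> fst d"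
  shows "(\<Sum>a\<in>UNIV. tjac d c b a (snd d q) * tjac c d a l (snd c q)) = (if b = l then 1 else 0)"
proof -
  have x: "snd c q \<in> chart_overlap c d" and y: "snd d q \<in> chart_overlap d c"
    using q by (simp_all add: chart_overlap_memI)
  have to_y: "transition c d (snd c q) = snd d q"
    using q chart_inv_chart[OF c] by (simp add: transition_def)
  have "has_grad (\<lambda>z. transition d c (transition c d z) $ b) (snd c q)
      (\<lambda>l. \<Sum>a\<in>UNIV. tjac d c b a (transition c d (snd c q)) * tjac c d a l (snd c q))"
    by (rule has_grad_chain[OF has_grad_transition[OF c d x]])
       (rule has_grad_transition[OF d c], simp add: to_y y)
  moreover have "has_grad (\<lambda>z. transition d c (transition c d z) $ b) (snd c q) (\<lambda>l. if b = l then 1 else 0)"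
    by (rule has_grad_cong[OF chart_overlap_open[OF c d] x _ has_grad_coord])
       (simp add: transition_roundtrip[OF c d])
  ultimately have "(\<lambda>l. \<Sum>a\<in>UNIV. tjac d c b a (transition c d (snd c q)) * tjac c d a l (snd c q))
      = (\<lambda>l. if b = l then 1 else 0)"
    by (rule has_grad_unique)
  from fun_cong[OF this, of l] show ?thesis by (simp add: to_y)
qed

lemma tjac_sym:
  assumes "c \<in> A" "d \<in> A" "x \<in> chart_overlap c d"
  shows "pd (tjac c d i m) (ax b) x = pd (tjac c d i b) (ax m) x"
  unfolding tjac_def[abs_def]
  by (rule smooth_pd_commute[OF transition_smooth[OF assms(1,2)] chart_overlap_open[OF assms(1,2)] assms(3)])

end
section \<open>The parallel frame of a splitting\<close>

text \<open>Fix a base point \<open>p\<^sub>0\<close> in a chart \<open>c\<^sub>0\<close>.  By the composition law,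
  \<open>\<epsilon>\<^sup>p\<^sup>,\<^sup>q = \<epsilon>\<^sup>p\<^sup>0\<^sup>,\<^sup>q \<circ> \<epsilon>\<^sup>p\<^sup>,\<^sup>p\<^sup>0\<close>, so in charts \<open>\<epsilon>(x,y) = F\<^sub>d(y) G\<^sub>c(x)\<close>: the \<open>frame\<close> \<open>F\<^sub>d(y)\<close> is the
  matrix of \<open>\<epsilon>\<^sup>p\<^sup>0\<^sup>,\<^sup>q\<close> and the \<open>coframe\<close> \<open>G\<^sub>c(x)\<close> that of \<open>\<epsilon>\<^sup>p\<^sup>,\<^sup>p\<^sup>0\<close>, its inverse.\<close>

locale based_splitting = splitting_atlas +
  fixes c0 :: "('m::topological_space, 'n::finite) chart" and p0 :: 'm
  assumes c0: "c0 \<in> A" and p0: "p0 \<in> fst c0"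
begin

definition x0 :: "real^'n" where "x0 = snd c0 p0"

lemma x0_img: "x0 \<in> chart_img c0"
  using p0 chart_img_memI x0_def by simp

definition frame :: "('m, 'n) chart \<Rightarrow> 'n \<Rightarrow> 'n \<Rightarrow> real^'n \<Rightarrow> real" where
  "frame d i j y = eps_coord eps c0 d i j (x0, y)"

definition coframe :: "('m, 'n) chart \<Rightarrow> 'n \<Rightarrow> 'n \<Rightarrow> real^'n \<Rightarrow> real" where
  "coframe d i j x = eps_coord eps d c0 i j (x, x0)"

lemma frame_eq: "frame d i j y = eps c0 d p0 (chart_inv d y) $ i $ j"
  using chart_inv_chart[OF c0 p0] by (simp add: frame_def eps_coord_def x0_def)

lemma coframe_eq: "coframe d i j x = eps d c0 (chart_inv d x) p0 $ i $ j"
  using chart_inv_chart[OF c0 p0] by (simp add: coframe_def eps_coord_def x0_def)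

lemma eps_coord_factor: assumes "c \<in> A" "d \<in> A" "x \<in> chart_img c" "y \<in> chart_img d"
  shows "eps_coord eps c d i j (x, y) = (\<Sum>m\<in>UNIV. frame d i m y * coframe c m j x)"
proof -
  have "eps c0 d p0 (chart_inv d y) ** eps c c0 (chart_inv c x) p0 = eps c d (chart_inv c x) (chart_inv d y)"
    using eps_compose[OF assms(1) c0 assms(2) chart_inv_in_domain[OF assms(3)] p0 chart_inv_in_domain[OF assms(4)]] .
  hence "eps c d (chart_inv c x) (chart_inv d y) $ i $ j = (eps c0 d p0 (chart_inv d y) ** eps c c0 (chart_inv c x) p0) $ i $ j"
    by simp
  also have "\<dots> = (\<Sum>m\<in>UNIV. frame d i m y * coframe c m j x)"
    by (simp add: frame_eq coframe_eq matrix_matrix_mult_def)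
  finally show ?thesis by (simp add: eps_coord_def)
qed

lemma frame_coframe_inv: assumes "d \<in> A" "y \<in> chart_img d"
  shows "(\<Sum>m\<in>UNIV. frame d i m y * coframe d m j y) = (if i = j then 1 else 0)"
  using eps_coord_factor[OF assms(1,1,2,2), of i j] eps_refl[OF assms(1) chart_inv_in_domain[OF assms(2)]]
  by (simp add: eps_coord_def mat_def)

lemma coframe_frame_inv: assumes "d \<in> A" "y \<in> chart_img d"
  shows "(\<Sum>m\<in>UNIV. coframe d i m y * frame d m j y) = (if i = j then 1 else 0)"
proof -
  have "eps d c0 (chart_inv d y) p0 ** eps c0 d p0 (chart_inv d y) = eps c0 c0 p0 p0"
    using eps_compose[OF c0 assms(1) c0 p0 chart_inv_in_domain[OF assms(2)] p0] .
  hence "(eps d c0 (chart_inv d y) p0 ** eps c0 d p0 (chart_inv d y)) $ i $ j = mat 1 $ i $ j"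
    using eps_refl[OF c0 p0] by simp
  thus ?thesis by (simp add: frame_eq coframe_eq matrix_matrix_mult_def mat_def)
qed

text \<open>Frame and coframe are smooth, being slices of the smooth components of \<open>\<epsilon>\<close>.\<close>

lemma frame_smooth: "d \<in> A \<Longrightarrow> smooth_fun (chart_img d) (frame d i j)"
  unfolding frame_def[abs_def]
  by (rule smooth_slice_snd[OF chart_img_prod_open[OF c0] chart_img_open _ eps_coord_smooth[OF c0]]) (auto simp: x0_img)

lemma coframe_smooth: "d \<in> A \<Longrightarrow> smooth_fun (chart_img d) (coframe d i j)"
  unfolding coframe_def[abs_def]
  by (rule smooth_slice_fst[OF chart_img_prod_open[OF _ c0] chart_img_open _ eps_coord_smooth[OF _ c0]]) (auto simp: x0_img)

definition dframe :: "('m, 'n) chart \<Rightarrow> 'n \<Rightarrow> 'n \<Rightarrow> 'n \<Rightarrow> real^'n \<Rightarrow> real" where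
  "dframe c k i j y = pd (frame c i j) (ax k) y"

definition ddframe :: "('m, 'n) chart \<Rightarrow> 'n \<Rightarrow> 'n \<Rightarrow> 'n \<Rightarrow> 'n \<Rightarrow> real^'n \<Rightarrow> real" where
  "ddframe c r k i j y = pd (pd (frame c i j) (ax k)) (ax r) y"

definition dcoframe :: "('m, 'n) chart \<Rightarrow> 'n \<Rightarrow> 'n \<Rightarrow> 'n \<Rightarrow> real^'n \<Rightarrow> real" where
  "dcoframe c k i j y = pd (coframe c i j) (ax k) y"

lemma has_grad_frame: "c \<in> A \<Longrightarrow> y \<in> chart_img c \<Longrightarrow> has_grad (frame c i j) y (\<lambda>k. dframe c k i j y)"
  unfolding dframe_def using has_grad_smooth[OF frame_smooth chart_img_open] by blast

lemma has_grad_coframe: "c \<in> A \<Longrightarrow> y \<in> chart_img c \<Longrightarrow> has_grad (coframe c i j) y (\<lambda>k. dcoframe c k i j y)"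
  unfolding dcoframe_def using has_grad_smooth[OF coframe_smooth chart_img_open] by blast

lemma has_grad_dframe: "c \<in> A \<Longrightarrow> y \<in> chart_img c \<Longrightarrow> has_grad (dframe c a i j) y (\<lambda>k. ddframe c k a i j y)"
  unfolding dframe_def[abs_def] ddframe_def using has_grad_smooth[OF smooth_fun_pd[OF frame_smooth] chart_img_open] by blast

lemma ddframe_sym: "c \<in> A \<Longrightarrow> y \<in> chart_img c \<Longrightarrow> ddframe c r k i j y = ddframe c k r i j y"
  unfolding ddframe_def by (rule smooth_pd_commute[OF frame_smooth chart_img_open])

lemma dcoframe_formula:
  assumes c: "c \<in> A" and y: "y \<in> chart_img c"
  shows "dcoframe c k a j y = - (\<Sum>i\<in>UNIV. coframe c a i y * (\<Sum>m\<in>UNIV. dframe c k i m y * coframe c m j y))"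
proof -
  have Z: "(\<Sum>m\<in>UNIV. dframe c k i m y * coframe c m j y + frame c i m y * dcoframe c k m j y) = 0" for i
  proof -
    have h1: "has_grad (\<lambda>y. \<Sum>m\<in>UNIV. frame c i m y * coframe c m j y) y (\<lambda>k. \<Sum>m\<in>UNIV. dframe c k i m y * coframe c m j y + frame c i m y * dcoframe c k m j y)"
      by (intro has_grad_sum has_grad_mult has_grad_frame has_grad_coframe c y)
    have h2: "has_grad (\<lambda>y. \<Sum>m\<in>UNIV. frame c i m y * coframe c m j y) y (\<lambda>k. 0)"
      by (rule has_grad_cong[OF chart_img_open[OF c] y _ has_grad_const[of "if i = j then 1 else 0"]]) (simp add: frame_coframe_inv[OF c])
    show ?thesis using has_grad_unique[OF h1 h2] by metis
  qed
  have "dcoframe c k a j y = (\<Sum>i\<in>UNIV. coframe c a i y * (\<Sum>m\<in>UNIV. frame c i m y * dcoframe c k m j y))"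
    using contract_left[of "\<lambda>i m. coframe c i m y" "\<lambda>i m. frame c i m y" a "\<lambda>m. dcoframe c k m j y"] coframe_frame_inv[OF c y] by simp
  also have "\<dots> = (\<Sum>i\<in>UNIV. coframe c a i y * (- (\<Sum>m\<in>UNIV. dframe c k i m y * coframe c m j y)))"
  proof (rule sum.cong[OF refl])
    fix i
    have "(\<Sum>m\<in>UNIV. frame c i m y * dcoframe c k m j y) = - (\<Sum>m\<in>UNIV. dframe c k i m y * coframe c m j y)"
      using Z[of i] by (simp add: sum.distrib eq_neg_iff_add_eq_0 add.commute)
    thus "coframe c a i y * (\<Sum>m\<in>UNIV. frame c i m y * dcoframe c k m j y) = coframe c a i y * - (\<Sum>m\<in>UNIV. dframe c k i m y * coframe c m j y)"
      by simp
  qed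
  finally show ?thesis by (simp add: sum_negf)
qed

lemma eps_coord_has_derivative: assumes "c \<in> A" "d \<in> A" "x \<in> chart_img c" "y \<in> chart_img d"
  shows "(eps_coord eps c d i j has_derivative (\<lambda>h. \<Sum>m\<in>UNIV.
      (\<Sum>k\<in>UNIV. snd h $ k * pd (frame d i m) (ax k) y) * coframe c m j x +
      frame d i m y * (\<Sum>k\<in>UNIV. fst h $ k * pd (coframe c m j) (ax k) x))) (at (x, y))"
proof -
  let ?H = "\<lambda>z. \<Sum>m\<in>UNIV. frame d i m (snd z) * coframe c m j (fst z)"
  have "(?H has_derivative (\<lambda>h. \<Sum>m\<in>UNIV.
      (\<Sum>k\<in>UNIV. snd h $ k * pd (frame d i m) (ax k) y) * coframe c m j x +
      frame d i m y * (\<Sum>k\<in>UNIV. fst h $ k * pd (coframe c m j) (ax k) x))) (at (x, y))"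
  proof (rule has_derivative_sum)
    fix m
    have f: "((\<lambda>z. frame d i m (snd z)) has_derivative (\<lambda>h. \<Sum>k\<in>UNIV. snd h $ k * pd (frame d i m) (ax k) y)) (at (x, y))"
      using has_derivative_snd_comp[of "frame d i m" _ "(x,y)"] smooth_fun_has_derivative_coords[OF frame_smooth[OF assms(2)] chart_img_open[OF assms(2)] assms(4), of i m] by simp
    have g: "((\<lambda>z. coframe c m j (fst z)) has_derivative (\<lambda>h. \<Sum>k\<in>UNIV. fst h $ k * pd (coframe c m j) (ax k) x)) (at (x, y))"
      using has_derivative_fst_comp[of "coframe c m j" _ "(x,y)"] smooth_fun_has_derivative_coords[OF coframe_smooth[OF assms(1)] chart_img_open[OF assms(1)] assms(3), of m j] by simp
    show "((\<lambda>z. frame d i m (snd z) * coframe c m j (fst z)) has_derivative (\<lambda>h. (\<Sum>k\<in>UNIV. snd h $ k * pd (frame d i m) (ax k) y) * coframe c m j x +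
      frame d i m y * (\<Sum>k\<in>UNIV. fst h $ k * pd (coframe c m j) (ax k) x))) (at (x, y))"
      using has_derivative_mult[OF f g] by (simp add: algebra_simps)
  qed
  thus ?thesis
    by (rule has_derivative_transform_within_open[OF _ chart_img_prod_open[OF assms(1,2)]])
       (use assms in \<open>auto simp: eps_coord_factor[OF assms(1,2)]\<close>)
qed

lemma dx_eps: assumes "c \<in> A" "d \<in> A" "x \<in> chart_img c" "y \<in> chart_img d"
  shows "dx (eps_coord eps c d i j) k (x, y) = (\<Sum>m\<in>UNIV. frame d i m y * pd (coframe c m j) (ax k) x)"
  using pd_from_has_derivative[OF eps_coord_has_derivative[OF assms], where v="(ax k, 0)"] by (simp add: dx_def pd_def)

lemma dy_eps: assumes "c \<in> A" "d \<in> A" "x \<in> chart_img c" "y \<in> chart_img d"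
  shows "dy (eps_coord eps c d i j) k (x, y) = (\<Sum>m\<in>UNIV. pd (frame d i m) (ax k) y * coframe c m j x)"
  using pd_from_has_derivative[OF eps_coord_has_derivative[OF assms], where v="(0, ax k)"] by (simp add: dy_def pd_def)

lemma Gamma_eq: "c \<in> A \<Longrightarrow> y \<in> chart_img c \<Longrightarrow>
   Gamma eps c i k j y = Gamma_form (\<lambda>k i j. dframe c k i j y) (\<lambda>i j. coframe c i j y) k i j"
  unfolding Gamma_def Gamma_form_def dframe_def by (simp add: dy_eps)

lemma dGamma_eq:
  assumes c: "c \<in> A" and y: "y \<in> chart_img c"
  shows "frechet_derivative (Gamma eps c i k j) (at y) (ax r) =
    dGamma_form (\<lambda>r k i j. ddframe c r k i j y) (\<lambda>k i j. dframe c k i j y) (\<lambda>i j. coframe c i j y) (\<lambda>k i j. dcoframe c k i j y) r k i j"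
proof -
  have "has_grad (\<lambda>y. \<Sum>b\<in>UNIV. dframe c k i b y * coframe c b j y) y
      (\<lambda>r. \<Sum>b\<in>UNIV. ddframe c r k i b y * coframe c b j y + dframe c k i b y * dcoframe c r b j y)"
    by (intro has_grad_sum has_grad_mult has_grad_dframe has_grad_coframe c y)
  hence "has_grad (Gamma eps c i k j) y (\<lambda>r. \<Sum>b\<in>UNIV. ddframe c r k i b y * coframe c b j y + dframe c k i b y * dcoframe c r b j y)"
    by (rule has_grad_cong[OF chart_img_open[OF c] y, rotated]) (simp add: Gamma_eq[OF c] Gamma_form_def)
  from has_grad_pd[OF this, of r] show ?thesis by (simp add: pd_def dGamma_form_def)
qed

lemma curvR2_eq:
  assumes c: "c \<in> A" and y: "y \<in> chart_img c"
  shows "curvR2 eps c i r j k y =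
    R2_form (\<lambda>r k i j. ddframe c r k i j y) (\<lambda>k i j. dframe c k i j y) (\<lambda>i j. coframe c i j y) (\<lambda>k i j. dcoframe c k i j y) i r j k"
  unfolding curvR2_def B_coeff_def R2_form_def
  by (simp add: dGamma_eq[OF c y] Gamma_eq[OF c y])

definition struct_fun :: "('m, 'n) chart \<Rightarrow> 'n \<Rightarrow> 'n \<Rightarrow> 'n \<Rightarrow> real^'n \<Rightarrow> real" where
  "struct_fun c m u v y =
     struct_form (\<lambda>k i j. dframe c k i j y) (\<lambda>i j. frame c i j y) (\<lambda>i j. coframe c i j y) m u v"

abbreviation dstruct_fun :: "('m, 'n) chart \<Rightarrow> real^'n \<Rightarrow> 'n \<Rightarrow> 'n \<Rightarrow> 'n \<Rightarrow> 'n \<Rightarrow> real" where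
  "dstruct_fun c y k m u v \<equiv> dstruct_form (\<lambda>r k i j. ddframe c r k i j y) (\<lambda>k i j. dframe c k i j y)
     (\<lambda>i j. frame c i j y) (\<lambda>i j. coframe c i j y) (\<lambda>k i j. dcoframe c k i j y) k m u v"

lemma has_grad_struct_fun:
  assumes c: "c \<in> A" and y: "y \<in> chart_img c"
  shows "has_grad (struct_fun c m u v) y (\<lambda>k. dstruct_fun c y k m u v)"
proof -
  have "has_grad (\<lambda>y. \<Sum>i\<in>UNIV. coframe c m i y * (\<Sum>a\<in>UNIV. dframe c a i u y * frame c a v y - dframe c a i v y * frame c a u y)) y
     (\<lambda>k. \<Sum>i\<in>UNIV. dcoframe c k m i y * (\<Sum>a\<in>UNIV. dframe c a i u y * frame c a v y - dframe c a i v y * frame c a u y) +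
        coframe c m i y * (\<Sum>a\<in>UNIV. (ddframe c k a i u y * frame c a v y + dframe c a i u y * dframe c k a v y) -
            (ddframe c k a i v y * frame c a u y + dframe c a i v y * dframe c k a u y)))"
    by (intro has_grad_sum has_grad_mult has_grad_diff has_grad_dframe has_grad_frame has_grad_coframe c y)
  thus ?thesis
    unfolding struct_fun_def[abs_def] struct_form_def bracket_form_def dstruct_form_def dbracket_form_def .
qed

text \<open>\<open>\<R>\<^sub>2 = 0\<close> at a point iff the structure functions are critical there, by the first
  key identity and invertibility of the frame.\<close>

lemma curvR2_contract:
  assumes c: "c \<in> A" and y: "y \<in> chart_img c"
  shows "(\<Sum>r\<in>UNIV. \<Sum>j\<in>UNIV. curvR2 eps c i r j k y * frame c j u y * frame c r v y) = (\<Sum>m\<in>UNIV. frame c i m y * dstruct_fun c y k m u v)"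
  unfolding curvR2_eq[OF c y]
  by (rule R2_form_contract) (use frame_coframe_inv[OF c y] coframe_frame_inv[OF c y] dcoframe_formula[OF c y] ddframe_sym[OF c y] in auto)

lemma R2_zero_iff_dstruct:
  assumes c: "c \<in> A" and y: "y \<in> chart_img c"
  shows "(\<forall>i r j k. curvR2 eps c i r j k y = 0) \<longleftrightarrow> (\<forall>k m u v. dstruct_fun c y k m u v = 0)"
proof
  assume R: "\<forall>i r j k. curvR2 eps c i r j k y = 0"
  show "\<forall>k m u v. dstruct_fun c y k m u v = 0"
  proof (intro allI)
    fix k m u v
    have "(\<Sum>m\<in>UNIV. frame c i m y * dstruct_fun c y k m u v) = 0" for i
      using curvR2_contract[OF c y, of i k u v] R by simp
    thus "dstruct_fun c y k m u v = 0"
      by (rule contract1_eq_zero[where G="\<lambda>i j. coframe c i j y" and F="\<lambda>i j. frame c i j y", rotated]) (use coframe_frame_inv[OF c y] in auto)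
  qed
next
  assume D: "\<forall>k m u v. dstruct_fun c y k m u v = 0"
  show "\<forall>i r j k. curvR2 eps c i r j k y = 0"
  proof (intro allI)
    fix i r j k
    show "curvR2 eps c i r j k y = 0"
    proof (rule contract2_eq_zero[where F="\<lambda>i j. frame c i j y" and G="\<lambda>i j. coframe c i j y" and T="\<lambda>r j. curvR2 eps c i r j k y"])
      show "(\<Sum>m\<in>UNIV. frame c i m y * coframe c m j y) = (if i = j then 1 else 0)" for i j using frame_coframe_inv[OF c y] .
      show "(\<Sum>r\<in>UNIV. \<Sum>j\<in>UNIV. curvR2 eps c i r j k y * frame c j u y * frame c r v y) = 0" for u v
        using curvR2_contract[OF c y, of i k u v] D by simp
    qed
  qed
qed

lemma curvR_contract:
  assumes c: "c \<in> A" and d: "d \<in> A" and x: "x \<in> chart_img c" and y: "y \<in> chart_img d"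
  shows "(\<Sum>k\<in>UNIV. \<Sum>j\<in>UNIV. curvR eps c d i k j (x, y) * frame c j u x * frame c k v x)
       = (\<Sum>m\<in>UNIV. frame d i m y * (struct_fun d m u v y - struct_fun c m u v x))"
proof -
  have A: "A_coeff eps c d i k j (x, y) = A_form (\<lambda>i j. frame d i j y) (\<lambda>k i j. dframe d k i j y) (\<lambda>i j. coframe c i j x) (\<lambda>k i j. dcoframe c k i j x) i k j" for i k j
    unfolding A_coeff_def A_form_def
    by (simp add: dx_eps[OF c d x y] dy_eps[OF c d x y] eps_coord_factor[OF d c y x] eps_coord_factor[OF c d x y] dframe_def dcoframe_def)
  show ?thesis
    unfolding curvR_def A struct_fun_def
    by (rule curvR_form_contract) (use coframe_frame_inv[OF c x] dcoframe_formula[OF c x] frame_coframe_inv[OF d y] in auto)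
qed

text \<open>On an overlap the frame transforms with the Jacobian of the transition; this is the
  transformation law of the components of \<open>\<epsilon>\<close> together with \<open>jac_id\<close>.\<close>

lemma frame_chart_change:
  assumes c: "c \<in> A" and d: "d \<in> A" and y: "y \<in> chart_overlap d c"
  shows "frame d i j y = (\<Sum>m\<in>UNIV. tjac c d i m (transition d c y) * frame c m j (transition d c y))"
proof -
  have q: "chart_inv d y \<in> fst c \<inter> fst d" and p: "p0 \<in> fst c0 \<inter> fst c0"
    using chart_overlap_inv[OF d y] p0 by auto
  have x: "chart_inv c (transition d c y) = chart_inv d y" "snd c (chart_inv d y) = transition d c y"
    using transition_overlap[OF d c y] by (simp_all add: transition_def)
  have "eps c0 d p0 (chart_inv d y) = jac c d (snd c (chart_inv d y)) ** eps c0 c p0 (chart_inv d y) ** jac c0 c0 (snd c0 p0)"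
    using eps_chart_change[OF c0 c0 c d p q] by simp
  also have "jac c0 c0 (snd c0 p0) = mat 1" using jac_id[OF c0] x0_img by (simp add: x0_def)
  finally have "eps c0 d p0 (chart_inv d y) = jac c d (transition d c y) ** eps c0 c p0 (chart_inv c (transition d c y))"
    using x by simp
  thus ?thesis by (simp add: frame_eq matrix_matrix_mult_def jac_eq_tjac)
qed

lemma dframe_chart_change:
  assumes c: "c \<in> A" and d: "d \<in> A" and q: "q \<in> fst c" "q \<in> fst d"
  defines "x \<equiv> snd c q" and "y \<equiv> snd d q"
  shows "dframe d a i j y = (\<Sum>m\<in>UNIV. (\<Sum>b\<in>UNIV. pd (tjac c d i m) (ax b) x * tjac d c b a y) * frame c m j x
           + tjac c d i m x * (\<Sum>b\<in>UNIV. dframe c b m j x * tjac d c b a y))"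
proof -
  have xW: "x \<in> chart_overlap c d" and yW: "y \<in> chart_overlap d c"
    using q by (simp_all add: x_def y_def chart_overlap_memI)
  have yx: "transition d c y = x" using q chart_inv_chart[OF d] by (simp add: transition_def x_def y_def)
  have x_img: "x \<in> chart_img c" using q by (simp add: x_def chart_img_memI)
  have y_img: "y \<in> chart_img d" using q by (simp add: y_def chart_img_memI)
  let ?T = "\<lambda>b a. tjac d c b a y"
  have tJ: "has_grad (\<lambda>y. tjac c d i m (transition d c y)) y (\<lambda>a. \<Sum>b\<in>UNIV. pd (tjac c d i m) (ax b) x * ?T b a)" for i m
    by (rule has_grad_chain[OF has_grad_transition[OF d c yW]])
       (simp add: yx has_grad_smooth[OF tjac_smooth[OF c d] chart_overlap_open[OF c d] xW])
  have tF: "has_grad (\<lambda>y. frame c m j (transition d c y)) y (\<lambda>a. \<Sum>b\<in>UNIV. dframe c b m j x * ?T b a)" for m j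
    by (rule has_grad_chain[OF has_grad_transition[OF d c yW]]) (simp add: yx has_grad_frame[OF c x_img])
  have "has_grad (\<lambda>y. \<Sum>m\<in>UNIV. tjac c d i m (transition d c y) * frame c m j (transition d c y)) y
     (\<lambda>a. \<Sum>m\<in>UNIV. (\<Sum>b\<in>UNIV. pd (tjac c d i m) (ax b) x * ?T b a) * frame c m j (transition d c y)
        + tjac c d i m (transition d c y) * (\<Sum>b\<in>UNIV. dframe c b m j x * ?T b a))"
    by (intro has_grad_sum has_grad_mult tJ tF)
  hence "has_grad (frame d i j) y
     (\<lambda>a. \<Sum>m\<in>UNIV. (\<Sum>b\<in>UNIV. pd (tjac c d i m) (ax b) x * ?T b a) * frame c m j x
        + tjac c d i m x * (\<Sum>b\<in>UNIV. dframe c b m j x * ?T b a))"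
    unfolding yx by (rule has_grad_cong[OF chart_overlap_open[OF d c] yW, rotated]) (simp add: frame_chart_change[OF c d])
  from fun_cong[OF has_grad_unique[OF has_grad_frame[OF d y_img] this], of a] show ?thesis .
qed

text \<open>Therefore the structure functions at a point of \<open>M\<close> do not depend on the chart used
  to compute them: the bracket of vector fields is natural.\<close>

lemma struct_fun_chart_independent:
  assumes c: "c \<in> A" and d: "d \<in> A" and q: "q \<in> fst c" "q \<in> fst d"
  shows "struct_fun d n u v (snd d q) = struct_fun c n u v (snd c q)"
proof -
  define x where "x = snd c q"
  define y where "y = snd d q"
  have xW: "x \<in> chart_overlap c d" and yW: "y \<in> chart_overlap d c"
    using q by (simp_all add: x_def y_def chart_overlap_memI)
  have yx: "transition d c y = x" using q chart_inv_chart[OF d] by (simp add: transition_def x_def y_def)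
  have x_img: "x \<in> chart_img c" and y_img: "y \<in> chart_img d"
    using q by (simp_all add: x_def y_def chart_img_memI)
  have frame_y: "frame d i j y = (\<Sum>m\<in>UNIV. tjac c d i m x * frame c m j x)" for i j
    using frame_chart_change[OF c d yW] by (simp add: yx)
  have "struct_fun d n u v y = struct_form
      (\<lambda>a i j. \<Sum>m\<in>UNIV. (\<Sum>b\<in>UNIV. pd (tjac c d i m) (ax b) x * tjac d c b a y) * frame c m j x
          + tjac c d i m x * (\<Sum>b\<in>UNIV. dframe c b m j x * tjac d c b a y))
      (\<lambda>i j. \<Sum>m\<in>UNIV. tjac c d i m x * frame c m j x) (\<lambda>i j. coframe d i j y) n u v"
    unfolding struct_fun_def frame_y dframe_chart_change[OF c d q, folded x_def y_def] ..
  also have "\<dots> = struct_fun c n u v x"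
    unfolding struct_fun_def
  proof (rule struct_form_chart_change)
    show "(\<Sum>m\<in>UNIV. frame c i m x * coframe c m j x) = (if i = j then 1 else 0)" for i j
      by (rule frame_coframe_inv[OF c x_img])
    show "(\<Sum>a\<in>UNIV. tjac d c b a y * tjac c d a l x) = (if b = l then 1 else 0)" for b l
      unfolding x_def y_def by (rule tjac_inverse[OF c d q])
    show "pd (tjac c d i m) (ax b) x = pd (tjac c d i b) (ax m) x" for b i m
      by (rule tjac_sym[OF c d xW])
    show "(\<Sum>m\<in>UNIV. coframe d i m y * (\<Sum>m'\<in>UNIV. tjac c d m m' x * frame c m' j x)) = (if i = j then 1 else 0)" for i j
      using coframe_frame_inv[OF d y_img] by (simp add: frame_y)
  qed
  finally show ?thesis by (simp add: x_def y_def)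
qed

text \<open>Flatness forces the structure functions to take the same value at any two points of
  a chart, so their derivative, hence \<open>\<R>\<^sub>2\<close>, vanishes.\<close>

lemma flat_imp_struct_fun_const:
  assumes fl: "flat A eps" and c: "c \<in> A" and x: "x \<in> chart_img c" and y: "y \<in> chart_img c"
  shows "struct_fun c m u v y = struct_fun c m u v x"
proof -
  have "(\<Sum>m\<in>UNIV. frame c i m y * (struct_fun c m u v y - struct_fun c m u v x)) = 0" for i
    using curvR_contract[OF c c x y, of i u v, symmetric] fl c x y unfolding flat_def by simp
  hence "struct_fun c m u v y - struct_fun c m u v x = 0"
    by (rule contract1_eq_zero[where G="\<lambda>i j. coframe c i j y" and F="\<lambda>i j. frame c i j y", rotated]) (use coframe_frame_inv[OF c y] in auto)
  thus ?thesis by simp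
qed

lemma flat_imp_R2: assumes fl: "flat A eps" shows "R2_zero A eps"
  unfolding R2_zero_def
proof (intro ballI allI)
  fix c y i r j k assume c: "c \<in> A" and y: "y \<in> chart_img c"
  have "dstruct_fun c y k m u v = 0" for k m u v
  proof -
    have "has_grad (struct_fun c m u v) y (\<lambda>k. 0)"
      by (rule has_grad_cong[OF chart_img_open[OF c] y _ has_grad_const[of "struct_fun c m u v y"]]) (use flat_imp_struct_fun_const[OF fl c y] in auto)
    from fun_cong[OF has_grad_unique[OF has_grad_struct_fun[OF c y] this], of k] show ?thesis by simp
  qed
  thus "curvR2 eps c i r j k y = 0" using R2_zero_iff_dstruct[OF c y] by blast
qed

text \<open>Conversely, if \<open>\<R>\<^sub>2 = 0\<close> the structure functions have vanishing derivative, so they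
  are constant on small balls in each chart.\<close>

lemma R2_imp_struct_fun_locally_const:
  assumes R2: "R2_zero A eps" and c: "c \<in> A" and y: "y \<in> chart_img c"
  shows "\<exists>e>0. ball y e \<subseteq> chart_img c \<and> (\<forall>z\<in>ball y e. \<forall>m u v. struct_fun c m u v z = struct_fun c m u v y)"
proof -
  obtain e where e: "e > 0" "ball y e \<subseteq> chart_img c" using chart_img_open[OF c] y open_contains_ball by blast
  have "\<forall>z\<in>ball y e. struct_fun c m u v z = struct_fun c m u v y" for m u v
  proof -
    have "\<exists>C. \<forall>z\<in>ball y e. struct_fun c m u v z = C"
    proof (rule has_derivative_zero_constant)
      show "convex (ball y e)" by simp
      fix z assume z: "z \<in> ball y e"
      hence zc: "z \<in> chart_img c" using e by auto
      have "\<forall>k m u v. dstruct_fun c z k m u v = 0" using R2_zero_iff_dstruct[OF c zc] R2 c zc unfolding R2_zero_def by blast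
      hence "has_grad (struct_fun c m u v) z (\<lambda>k. 0)" using has_grad_struct_fun[OF c zc, of m u v] by simp
      thus "(struct_fun c m u v has_derivative (\<lambda>h. 0)) (at z within ball y e)"
        unfolding has_grad_def by (simp add: has_derivative_at_withinI)
    qed
    then obtain C where "\<forall>z\<in>ball y e. struct_fun c m u v z = C" by blast
    moreover have "y \<in> ball y e" using e by simp
    ultimately show ?thesis by metis
  qed
  thus ?thesis using e by blast
qed

text \<open>The structure functions as functions on \<open>M\<close>, computed in any chart containing the
  point; by \<open>struct_fun_chart_independent\<close> the choice of chart is irrelevant.\<close>

definition struct_at :: "'m \<Rightarrow> 'n \<Rightarrow> 'n \<Rightarrow> 'n \<Rightarrow> real" where
  "struct_at q = (let c = (SOME c. c \<in> A \<and> q \<in> fst c) in (\<lambda>m u v. struct_fun c m u v (snd c q)))"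

lemma struct_at_chart:
  assumes "c \<in> A" "q \<in> fst c"
  shows "struct_at q = (\<lambda>m u v. struct_fun c m u v (snd c q))"
proof -
  define c' where "c' = (SOME c. c \<in> A \<and> q \<in> fst c)"
  have c': "c' \<in> A" "q \<in> fst c'"
    unfolding c'_def using someI_ex[OF atlas_covers[of q, unfolded Bex_def]] by auto
  show ?thesis
    unfolding struct_at_def c'_def[symmetric] Let_def
    using struct_fun_chart_independent[OF assms(1) c'(1) assms(2) c'(2)] by simp
qed

lemma R2_imp_struct_at_locally_const:
  assumes R2: "R2_zero A eps"
  shows "\<exists>N. open N \<and> q \<in> N \<and> (\<forall>q'\<in>N. struct_at q' = struct_at q)"
proof -
  obtain c where c: "c \<in> A" "q \<in> fst c" using atlas_covers by blast
  obtain e where e: "ball (snd c q) e \<subseteq> chart_img c"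
      "\<forall>z\<in>ball (snd c q) e. \<forall>m u v. struct_fun c m u v z = struct_fun c m u v (snd c q)" "e > 0"
    using R2_imp_struct_fun_locally_const[OF R2 c(1) chart_img_memI[OF c(2)]] by blast
  define N where "N = fst c \<inter> snd c -` ball (snd c q) e"
  have "open N" unfolding N_def by (rule chart_open_preimage[OF c(1)]) simp
  moreover have "q \<in> N" using c e by (simp add: N_def)
  moreover have "struct_at q' = struct_at q" if "q' \<in> N" for q'
    using that struct_at_chart[OF c(1)] c e(2) by (auto simp: N_def)
  ultimately show ?thesis by blast
qed

text \<open>On a connected manifold, \<open>\<R>\<^sub>2 = 0\<close> makes the structure functions globally constant, and
  then \<open>\<R>(\<epsilon>)\<close> vanishes between any two points.\<close>

lemma R2_imp_flat:
  assumes R2: "R2_zero A eps" and conn: "connected (UNIV :: 'm set)"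
  shows "flat A eps"
proof -
  have "struct_at constant_on UNIV"
  proof (rule locally_constant_imp_constant[OF conn])
    fix q :: 'm
    obtain N where "open N" "q \<in> N" "\<forall>q'\<in>N. struct_at q' = struct_at q"
      using R2_imp_struct_at_locally_const[OF R2] by blast
    thus "\<exists>T. openin (top_of_set UNIV) T \<and> q \<in> T \<and> (\<forall>q'\<in>T. struct_at q' = struct_at q)"
      by (metis open_openin subtopology_UNIV)
  qed
  then obtain S where S: "\<And>q. struct_at q = S" unfolding constant_on_def by blast
  have S_chart: "S = (\<lambda>m u v. struct_fun c m u v x)" if "c \<in> A" "x \<in> chart_img c" for c x
    using S[of "chart_inv c x"] struct_at_chart[OF that(1) chart_inv_in_domain[OF that(2)]]
      chart_chart_inv[OF that(2)] by simp
  show ?thesis unfolding flat_def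
  proof (intro ballI allI)
    fix c d x y i k j assume c: "c \<in> A" and d: "d \<in> A" and x: "x \<in> chart_img c" and y: "y \<in> chart_img d"
    have same: "struct_fun d m u v y = struct_fun c m u v x" for m u v
      using S_chart[OF c x] S_chart[OF d y] by (simp add: fun_eq_iff)
    show "curvR eps c d i k j (x, y) = 0"
    proof (rule contract2_eq_zero[where F="\<lambda>i j. frame c i j x" and G="\<lambda>i j. coframe c i j x"])
      show "(\<Sum>m\<in>UNIV. frame c i m x * coframe c m j x) = (if i = j then 1 else 0)" for i j
        by (rule frame_coframe_inv[OF c x])
      show "(\<Sum>k\<in>UNIV. \<Sum>j\<in>UNIV. curvR eps c d i k j (x, y) * frame c j u x * frame c k v x) = 0" for u v
        by (simp add: curvR_contract[OF c d x y] same)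
    qed
  qed
qed

end

text \<open>Any point of \<open>M\<close> can serve as base point of the frame.\<close>

theorem proposition16:
  fixes A :: "('m::{t2_space, second_countable_topology}, 'n::finite) chart set"
    and eps :: "('m, 'n) chart \<Rightarrow> ('m, 'n) chart \<Rightarrow> 'm \<Rightarrow> 'm \<Rightarrow> real^'n^'n"
  assumes "smooth_atlas A"
    and "CARD('n) \<ge> 2"
    and "connected (UNIV :: 'm set)"
    and "is_splitting A eps"
  shows "flat A eps \<longleftrightarrow> R2_zero A eps"
proof -
  interpret splitting_atlas A eps using assms(1,4) by unfold_locales
  obtain c0 p0 where "c0 \<in> A" "p0 \<in> fst c0" using atlas_covers by blast
  then interpret based_splitting A eps c0 p0 by unfold_locales
  show ?thesis using flat_imp_R2 R2_imp_flat[OF _ assms(3)] by blast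
qed

end
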